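(* Let $|\psi\rangle=\sum_i\sqrt{\lambda_i}|x_i\rangle\otimes|y_i\rangle$ be a pure state on $\mathcal H_a\otimes\mathcal H_b$ in Schmidt form, with $\lambda_1\ge\lambda_2\ge\dots\ge0$, $\sum_i\lambda_i=1$. Then $$C^a_{A,cc}(|\psi\rangle)=1-\sum_i\lambda_i^2,\qquad C^a_{F,cc}(|\psi\rangle)=1-\lambda_1 .$$ Moreover, for the affinity a closest classical-quantum state is $\sum_i\frac{\lambda_i^2}{\sum_j\lambda_j^2}|x_i\otimes y_i\rangle\langle x_i\otimes y_i|$.
   Context: $F(\rho,\sigma)=\mathrm{Tr}\sqrt{\sqrt\sigma\rho\sqrt\sigma}$, $A(\rho,\sigma)=\mathrm{Tr}(\sqrt\rho\sqrt\sigma)$, $d_X=1-X^2$ for $X\in\{F,A\}$. For an orthonormal basis $\mathcal B=\{|\alpha_i\rangle\}$ of $\mathcal H_a$, $C^a_X(\rho^{ab};\mathcal B)=\min d_X(\rho^{ab},\sigma)$ over states $\sigma=\sum_ip_i|\alpha_i\rangle\langle\alpha_i|\otimes\sigma_i$, and $C^a_{X,cc}(\rho^{ab})=\min_{\mathcal B}C^a_X(\rho^{ab};\mathcal B)$ over orthonormal eigenbases $\mathcal B$ of $\rho^a=\mathrm{Tr}_b\rho^{ab}$. *)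

theory Defs
  imports "HOL-Analysis.Analysis"
begin

text \<open>Finite-dimensional Hilbert spaces are modelled as complex^'n for a finite
index type 'n; operators as complex^'n^'n; H_a \<otimes> H_b is indexed by 'a \<times> 'b.\<close>

definition cinner :: "complex^'n \<Rightarrow> complex^'n \<Rightarrow> complex" where
  "cinner u v = (\<Sum>i\<in>UNIV. cnj (u$i) * v$i)"

definition outer :: "complex^'n \<Rightarrow> complex^'n \<Rightarrow> complex^'n^'n" where
  "outer u v = (\<chi> i j. u$i * cnj (v$j))"

definition tensor_vec :: "complex^'a \<Rightarrow> complex^'b \<Rightarrow> complex^('a::finite \<times> 'b::finite)" where
  "tensor_vec u v = (\<chi> p. u$(fst p) * v$(snd p))"

definition tensor_mat :: "complex^'a^'a \<Rightarrow> complex^'b^'b \<Rightarrow> complex^('a::finite \<times> 'b::finite)^('a::finite \<times> 'b::finite)" where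
  "tensor_mat A B = (\<chi> p q. A$(fst p)$(fst q) * B$(snd p)$(snd q))"

definition mtrace :: "complex^'n^'n \<Rightarrow> complex" where
  "mtrace A = (\<Sum>i\<in>UNIV. A$i$i)"

definition ptrace_b :: "complex^('a::finite \<times> 'b::finite)^('a::finite \<times> 'b::finite) \<Rightarrow> complex^'a^'a" where
  "ptrace_b R = (\<chi> i i'. \<Sum>j\<in>UNIV. R$(i,j)$(i',j))"

definition psd :: "complex^'n^'n \<Rightarrow> bool" where
  "psd A \<longleftrightarrow> (\<forall>v. Im (cinner v (A *v v)) = 0 \<and> Re (cinner v (A *v v)) \<ge> 0)"

definition density :: "complex^'n^'n \<Rightarrow> bool" where
  "density \<rho> \<longleftrightarrow> psd \<rho> \<and> mtrace \<rho> = 1"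

definition msqrt :: "complex^'n^'n \<Rightarrow> complex^'n^'n" where
  "msqrt A = (THE B. psd B \<and> B ** B = A)"

definition fidelity :: "complex^'n^'n \<Rightarrow> complex^'n^'n \<Rightarrow> real" where
  "fidelity \<rho> \<sigma> = Re (mtrace (msqrt (msqrt \<sigma> ** \<rho> ** msqrt \<sigma>)))"

definition affinity :: "complex^'n^'n \<Rightarrow> complex^'n^'n \<Rightarrow> real" where
  "affinity \<rho> \<sigma> = Re (mtrace (msqrt \<rho> ** msqrt \<sigma>))"

definition d_F :: "complex^'n^'n \<Rightarrow> complex^'n^'n \<Rightarrow> real" where
  "d_F \<rho> \<sigma> = 1 - (fidelity \<rho> \<sigma>)\<^sup>2"

definition d_A :: "complex^'n^'n \<Rightarrow> complex^'n^'n \<Rightarrow> real" where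
  "d_A \<rho> \<sigma> = 1 - (affinity \<rho> \<sigma>)\<^sup>2"

definition orthonormal_basis :: "('a \<Rightarrow> complex^'a) \<Rightarrow> bool" where
  "orthonormal_basis \<alpha> \<longleftrightarrow> (\<forall>i j. cinner (\<alpha> i) (\<alpha> j) = (if i = j then 1 else 0))"

definition eigenbasis :: "complex^'a^'a \<Rightarrow> ('a \<Rightarrow> complex^'a) \<Rightarrow> bool" where
  "eigenbasis M \<alpha> \<longleftrightarrow> orthonormal_basis \<alpha> \<and> (\<forall>i. \<exists>\<mu>. M *v \<alpha> i = \<mu> *s \<alpha> i)"

definition cq_states :: "('a \<Rightarrow> complex^'a) \<Rightarrow> (complex^('a::finite \<times> 'b::finite)^('a::finite \<times> 'b::finite)) set" where
  "cq_states \<alpha> = {\<sigma>. \<exists>(p::'a \<Rightarrow> real) (\<sigma>s::'a \<Rightarrow> complex^'b^'b).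
      (\<forall>i. p i \<ge> 0) \<and> sum p UNIV = 1 \<and> (\<forall>i. density (\<sigma>s i)) \<and>
      \<sigma> = (\<Sum>i\<in>UNIV. p i *\<^sub>R tensor_mat (outer (\<alpha> i) (\<alpha> i)) (\<sigma>s i))}"

definition C_basis :: "(complex^('a::finite \<times> 'b::finite)^('a::finite \<times> 'b::finite) \<Rightarrow> complex^('a::finite \<times> 'b::finite)^('a::finite \<times> 'b::finite) \<Rightarrow> real)
    \<Rightarrow> complex^('a::finite \<times> 'b::finite)^('a::finite \<times> 'b::finite) \<Rightarrow> ('a \<Rightarrow> complex^'a) \<Rightarrow> real" where
  "C_basis d \<rho> \<alpha> = Inf {d \<rho> \<sigma> | \<sigma>. \<sigma> \<in> cq_states \<alpha>}"

definition C_cc :: "(complex^('a::finite \<times> 'b::finite)^('a::finite \<times> 'b::finite) \<Rightarrow> complex^('a::finite \<times> 'b::finite)^('a::finite \<times> 'b::finite) \<Rightarrow> real)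
    \<Rightarrow> complex^('a::finite \<times> 'b::finite)^('a::finite \<times> 'b::finite) \<Rightarrow> real" where
  "C_cc d \<rho> = Inf {C_basis d \<rho> \<alpha> | \<alpha>. eigenbasis (ptrace_b \<rho>) \<alpha>}"

end

theory Submission
  imports Defs
begin

(* For the Schmidt vector psi = \<Sum>_i sqrt(lam_i) x_i \<otimes> y_i the reduced state is
   rho_a = \<Sum>_i lam_i |x_i><x_i|.  Fix an eigenbasis alpha of rho_a with eigenvalues mu_a and a
   cq state sigma = \<Sum>_a p_a |alpha_a><alpha_a| \<otimes> sigma_a.  The vectors w_a = (<alpha_a| \<otimes> 1) psi
   have squared norm mu_a, and density operators (and their square roots) are bounded by
   the identity.  Hence
     F(psi, sigma)^2 = <psi|sigma|psi> \<le> \<Sum>_a p_a mu_a \<le> lam_0,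
     A(psi, sigma) = <psi|sqrt sigma|psi> \<le> \<Sum>_a sqrt(p_a) mu_a \<le> sqrt(\<Sum>_a mu_a^2) = sqrt(\<Sum>_i lam_i^2),
   the last step by Cauchy-Schwarz.  In an eigenbasis extending the x_i both bounds are
   attained, by |x_0 \<otimes> y_0><x_0 \<otimes> y_0| and by \<Sum>_i lam_i^2 / (\<Sum>_j lam_j^2) |x_i \<otimes> y_i><x_i \<otimes> y_i|.
   Square roots of psd matrices are handled through the spectral theorem for Hermitian
   matrices, proved by maximising the quadratic form on unit spheres of invariant subspaces. *)

section \<open>Complex inner product and matrices\<close>

lemma cinner_add_right: "cinner u (v + w) = cinner u v + cinner u w"
  by (simp add: cinner_def distrib_left sum.distrib)
lemma cinner_add_left: "cinner (u + v) w = cinner u w + cinner v w"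
  by (simp add: cinner_def distrib_right sum.distrib)
lemma cinner_diff_right: "cinner u (v - w) = cinner u v - cinner u w"
  by (simp add: cinner_def right_diff_distrib sum_subtractf)
lemma cinner_diff_left: "cinner (u - v) w = cinner u w - cinner v w"
  by (simp add: cinner_def left_diff_distrib sum_subtractf)
lemma cinner_scale_right: "cinner u (c *s v) = c * cinner u v"
  by (simp add: cinner_def sum_distrib_left ac_simps)
lemma cinner_scale_left: "cinner (c *s u) v = cnj c * cinner u v"
  by (simp add: cinner_def sum_distrib_left ac_simps)
lemma cinner_sum_right: "cinner u (sum f S) = (\<Sum>x\<in>S. cinner u (f x))"
  by (simp add: cinner_def sum_component sum_distrib_left) (rule sum.swap)
lemma cinner_sum_left: "cinner (sum f S) u = (\<Sum>x\<in>S. cinner (f x) u)"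
  by (simp add: cinner_def sum_component sum_distrib_right) (rule sum.swap)
lemma cinner_cnj: "cnj (cinner u v) = cinner v u"
  by (simp add: cinner_def ac_simps)

lemma cinner_zero_left [simp]: "cinner 0 v = 0"
  by (simp add: cinner_def)
lemma cinner_zero_right [simp]: "cinner v 0 = 0"
  by (simp add: cinner_def)

lemmas cinner_simps = cinner_add_right cinner_add_left cinner_diff_right cinner_diff_left
  cinner_scale_right cinner_scale_left cinner_sum_right cinner_sum_left

lemma cnj_mult_self: "cnj z * z = complex_of_real ((cmod z)\<^sup>2)"
  by (metis complex_mult_cnj complex_norm_square mult.commute)

lemma mult_cnj_self: "z * cnj z = (complex_of_real (cmod z))\<^sup>2"
  by (simp only: complex_norm_square[symmetric] of_real_power)

lemma cinner_self: "cinner v v = of_real (\<Sum>i\<in>UNIV. (cmod (v$i))\<^sup>2)"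
  by (simp add: cinner_def cnj_mult_self)

lemma cinner_self_norm: "cinner v v = of_real ((norm v)\<^sup>2)"
proof -
  have "(norm v)\<^sup>2 = (\<Sum>i\<in>UNIV. (cmod (v$i))\<^sup>2)"
    unfolding norm_vec_def L2_set_def by (simp add: sum_nonneg)
  then show ?thesis by (simp only: cinner_self)
qed

lemma cinner_self_real: "cinner v v = of_real (Re (cinner v v))"
  by (simp add: cinner_self)

lemma cinner_self_nonneg: "Re (cinner v v) \<ge> 0"
  by (simp add: cinner_self sum_nonneg)

lemma cinner_self_eq_0: "cinner v v = 0 \<longleftrightarrow> v = 0"
  unfolding cinner_self_norm by simp

lemma cinner_self_pos: "v \<noteq> 0 \<Longrightarrow> Re (cinner v v) > 0"
  unfolding cinner_self_norm by simp

lemma normalize_vector: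
  assumes "v \<noteq> 0"
  obtains s u where "s > 0" "cinner u u = 1" "v = complex_of_real s *s u"
    "u = complex_of_real (1 / s) *s v"
proof -
  define s where "s = sqrt (Re (cinner v v))"
  define u where "u = complex_of_real (1 / s) *s v"
  have s: "s > 0" using cinner_self_pos[OF assms] by (simp add: s_def)
  have "complex_of_real s * complex_of_real s = cinner v v"
    using cinner_self_nonneg[of v] cinner_self_real[of v] by (simp add: s_def flip: of_real_mult)
  then have "cinner u u = 1"
    using s assms by (simp add: u_def cinner_scale_left cinner_scale_right cinner_self_eq_0)
  moreover have "v = complex_of_real s *s u"
    using s by (simp add: u_def vector_smult_assoc flip: of_real_mult)
  ultimately show thesis using that[OF s] u_def by blast
qed

definition adj :: "complex^'n^'m \<Rightarrow> complex^'m^'n" where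
  "adj A = (\<chi> i j. cnj (A$j$i))"

lemma cinner_adj: "cinner u (A *v v) = cinner (adj A *v u) v"
  by (simp add: cinner_def adj_def matrix_vector_mult_def sum_distrib_left sum_distrib_right
      ac_simps sum_component) (rule sum.swap)

definition hermitian :: "complex^'n^'n \<Rightarrow> bool" where
  "hermitian A \<longleftrightarrow> adj A = A"

lemma hermitian_cinner: "hermitian A \<Longrightarrow> cinner u (A *v v) = cinner (A *v u) v"
  by (simp add: hermitian_def cinner_adj)

lemma hermitian_quad_real: "hermitian A \<Longrightarrow> cinner v (A *v v) = of_real (Re (cinner v (A *v v)))"
  using hermitian_cinner[of A v v] cinner_cnj[of v "A *v v"]
  by (metis Reals_cnj_iff complex_is_Real_iff of_real_Re)

lemma cinner_axis_left: "cinner (axis i a) v = cnj a * v$i"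
proof -
  have "(\<lambda>k. cnj ((axis i a)$k) * v$k) = (\<lambda>k. if k = i then cnj a * v$k else 0)"
    by (auto simp: axis_def)
  then show ?thesis unfolding cinner_def by (subst (asm) fun_eq_iff) (simp add: sum.delta)
qed

lemma mult_vec_axis_component: "(A *v axis j b) $ i = A$i$j * b"
proof -
  have "(\<lambda>k. A$i$k * (axis j b)$k) = (\<lambda>k. if k = j then A$i$k * b else 0)"
    by (auto simp: axis_def)
  then show ?thesis unfolding matrix_vector_mult_def by (subst (asm) fun_eq_iff) (simp add: sum.delta)
qed

lemma mat_eq_cinner:
  fixes M N :: "complex^'n::finite^'m::finite"
  assumes "\<And>u v. cinner u (M *v v) = cinner u (N *v v)"
  shows "M = N"
proof -
  have "M$i$j = N$i$j" for i j
    using assms[of "axis i 1" "axis j 1"] by (simp add: cinner_axis_left mult_vec_axis_component)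
  then show ?thesis by (simp add: vec_eq_iff)
qed

text \<open>Over \<open>\<complex>\<close>, a real quadratic form forces Hermitian symmetry: polarise with
  \<open>e\<^sub>i + e\<^sub>j\<close> and \<open>e\<^sub>i + \<i> e\<^sub>j\<close>.\<close>
lemma psd_hermitian:
  assumes "psd A" shows "hermitian A"
proof -
  have q: "\<And>v. Im (cinner v (A *v v)) = 0" using assms by (simp add: psd_def)
  have ent: "A$i$j = cnj (A$j$i)" for i j
  proof -
    have cw: "cinner (axis i a) (A *v axis j b) = cnj a * b * A$i$j" for a b i j
      by (simp add: cinner_axis_left mult_vec_axis_component)
    have ex: "cinner (u1 + u2) (A *v (u1 + u2))
        = cinner u1 (A *v u1) + cinner u1 (A *v u2) + cinner u2 (A *v u1) + cinner u2 (A *v u2)" for u1 u2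
      by (simp only: matrix_vector_right_distrib cinner_add_left cinner_add_right add_ac)
    have ii: "Im (A$i$i) = 0" and jj: "Im (A$j$j) = 0"
      using q[of "axis i 1"] q[of "axis j 1"] by (simp_all add: cw)
    from q[of "axis i 1 + axis j 1"] have "Im (A$i$i) + Im (A$i$j) + Im (A$j$i) + Im (A$j$j) = 0"
      unfolding ex cw by simp
    moreover from q[of "axis i 1 + axis j \<i>"] have "Im (A$i$i) + Re (A$i$j) - Re (A$j$i) + Im (A$j$j) = 0"
      unfolding ex cw by simp
    ultimately show ?thesis using ii jj by (simp add: complex_eq_iff)
  qed
  then show ?thesis unfolding hermitian_def adj_def vec_eq_iff vec_lambda_beta by (metis complex_cnj_cnj)
qed

lemma outer_mult_vec: "outer u v *v w = cinner v w *s u"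
  by (simp add: outer_def matrix_vector_mult_def cinner_def vec_eq_iff sum_distrib_left ac_simps)

lemma sum_mult_vec: "(sum f S) *v v = (\<Sum>x\<in>S. f x *v v)"
  by (simp add: matrix_vector_mult_def vec_eq_iff sum_component sum_distrib_right) (rule allI, rule sum.swap)

lemma scaleR_mat_component: "(r *\<^sub>R (A::complex^'n^'m))$i$j = complex_of_real r * A$i$j"
  by (simp only: vector_scaleR_component) (simp add: scaleR_conv_of_real)

lemma scaleR_mult_vec: "(r *\<^sub>R (A::complex^'n^'m)) *v v = complex_of_real r *s (A *v v)"
  unfolding matrix_vector_mult_def vec_eq_iff scaleR_mat_component
  by (simp add: sum_distrib_left ac_simps)

lemma mult_vec_scale: "(A::complex^'n^'m) *v (c *s v) = c *s (A *v v)"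
  by (simp add: matrix_vector_mult_def vec_eq_iff sum_distrib_left ac_simps)

lemma mult_vec_sum: "(A::complex^'n^'m) *v (sum f S) = (\<Sum>x\<in>S. A *v f x)"
  by (simp add: matrix_vector_mult_def vec_eq_iff sum_component sum_distrib_left) (rule allI, rule sum.swap)

lemma outer_mult_left: "M ** outer u v = outer (M *v u) v"
  by (simp add: outer_def matrix_matrix_mult_def matrix_vector_mult_def vec_eq_iff
      sum_distrib_right sum_distrib_left ac_simps)

lemma outer_mult_right: "outer u v ** M = outer u (adj M *v v)"
  by (simp add: outer_def matrix_matrix_mult_def matrix_vector_mult_def adj_def vec_eq_iff
      sum_distrib_left ac_simps)

lemma outer_psd: "psd (outer u u)"
  unfolding psd_def outer_mult_vec cinner_scale_right
  by (simp add: cinner_cnj[of u, symmetric] mult.commute[of "cnj _"] flip: cnj_mult_self[simplified mult.commute])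

lemma outer_zero [simp]: "outer 0 0 = 0"
  by (simp add: outer_def vec_eq_iff)

lemma outer_scale: "outer (c *s u) (c *s u) = (cmod c)\<^sup>2 *\<^sub>R outer u u"
  by (simp add: vec_eq_iff outer_def vector_scaleR_component)
    (simp add: scaleR_conv_of_real mult_cnj_self[symmetric] ac_simps)

lemma mtrace_sum: "mtrace (sum f S) = (\<Sum>x\<in>S. mtrace (f x))"
  by (simp add: mtrace_def sum_component) (rule sum.swap)

lemma mtrace_scaleR: "mtrace (r *\<^sub>R A) = complex_of_real r * mtrace A"
  unfolding mtrace_def scaleR_mat_component by (simp add: sum_distrib_left)

lemma mtrace_outer: "mtrace (outer u v) = cinner v u"
  by (simp add: mtrace_def outer_def cinner_def ac_simps)

lemma mtrace_outer_mult: "mtrace (outer u v ** M) = cinner v (M *v u)"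
  by (simp add: outer_mult_right mtrace_outer cinner_adj)

lemma outer_density: "cinner u u = 1 \<Longrightarrow> density (outer u u)"
  by (simp add: density_def outer_psd mtrace_outer)

section \<open>Orthonormal families\<close>

definition orthonormal_on :: "('i \<Rightarrow> complex^'n) \<Rightarrow> 'i set \<Rightarrow> bool" where
  "orthonormal_on e L \<longleftrightarrow> (\<forall>i\<in>L. \<forall>j\<in>L. cinner (e i) (e j) = (if i = j then 1 else 0))"

lemma orthonormal_on_inj: "orthonormal_on e L \<Longrightarrow> inj_on e L"
  unfolding orthonormal_on_def inj_on_def by (metis zero_neq_one)

lemma orthonormal_on_UNIV_iff: "orthonormal_on \<alpha> UNIV \<longleftrightarrow> orthonormal_basis \<alpha>"
  by (simp add: orthonormal_on_def orthonormal_basis_def)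

lemma orthonormal_on_lessThan_Suc:
  assumes "orthonormal_on e {..<m}" "cinner w w = 1" "\<forall>l<m. cinner (e l) w = 0"
  shows "orthonormal_on (e(m := w)) {..<Suc m}"
  using assms unfolding orthonormal_on_def by (auto simp: less_Suc_eq cinner_cnj[symmetric, of w "e _"])

lemma cinner_orthonormal_sum:
  assumes "orthonormal_on e L" "finite L" "m \<in> L"
  shows "cinner (e m) (\<Sum>l\<in>L. c l *s e l) = c m"
proof -
  have "(\<Sum>l\<in>L. c l * cinner (e m) (e l)) = (\<Sum>l\<in>L. if l = m then c l else 0)"
    using assms by (intro sum.cong) (auto simp: orthonormal_on_def)
  then show ?thesis using assms by (simp add: sum.delta' cinner_sum_right cinner_scale_right)
qed

lemma cinner_orthonormal_combination:
  assumes "orthonormal_on e L" "finite L"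
  shows "cinner (\<Sum>l\<in>L. c l *s e l) (\<Sum>l\<in>L. d l *s e l) = (\<Sum>l\<in>L. cnj (c l) * d l)"
  by (simp add: cinner_sum_left cinner_scale_left cinner_orthonormal_sum[OF assms])

lemma orthonormal_on_independent:
  assumes "orthonormal_on e L" "finite L"
  shows "vec.independent (e ` L)"
proof
  assume "vec.dependent (e ` L)"
  then obtain u where u: "\<exists>v\<in>e ` L. u v \<noteq> 0" "(\<Sum>v\<in>e ` L. u v *s v) = 0"
    using vec.dependent_finite[of "e ` L"] assms by auto
  have s: "(\<Sum>l\<in>L. u (e l) *s e l) = 0"
    using u(2) by (simp add: sum.reindex[OF orthonormal_on_inj[OF assms(1)]])
  from u(1) obtain m where m: "m \<in> L" "u (e m) \<noteq> 0" by auto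
  have "cinner (e m) (\<Sum>l\<in>L. u (e l) *s e l) = u (e m)" by (rule cinner_orthonormal_sum[OF assms m(1)])
  with s m show False by simp
qed

lemma orthonormal_on_card_le:
  fixes e :: "'i \<Rightarrow> complex^'n::finite"
  assumes "orthonormal_on e L" "finite L"
  shows "card L \<le> CARD('n)"
proof -
  have "card (e ` L) \<le> vec.dim (UNIV :: (complex^'n) set)"
    using vec.independent_bound_general[OF orthonormal_on_independent[OF assms]]
      vec.dim_subset_UNIV[of "e ` L"] vec.dim_UNIV vec.dimension_def by (metis le_trans)
  then show ?thesis
    using card_image[OF orthonormal_on_inj[OF assms(1)]] by (simp add: vec_dim_card card_cart_basis)
qed

lemma orthonormal_on_expansion:
  fixes e :: "'i \<Rightarrow> complex^'n::finite"
  assumes "orthonormal_on e L" "finite L" "card L = CARD('n)"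
  shows "v = (\<Sum>l\<in>L. cinner (e l) v *s e l)"
proof -
  have inj: "inj_on e L" using orthonormal_on_inj[OF assms(1)] .
  have "(UNIV :: (complex^'n) set) \<subseteq> vec.span (e ` L)"
    by (rule vec.card_ge_dim_independent)
      (use orthonormal_on_independent[OF assms(1,2)] card_image[OF inj] assms(3)
       in \<open>auto simp: vec_dim_card card_cart_basis\<close>)
  then obtain c where c: "v = (\<Sum>w\<in>e ` L. c w *s w)"
    using vec.span_finite[of "e ` L"] assms(2) by auto
  then have c': "v = (\<Sum>l\<in>L. c (e l) *s e l)" by (simp add: sum.reindex[OF inj])
  have "(\<Sum>l\<in>L. cinner (e l) v *s e l) = (\<Sum>l\<in>L. c (e l) *s e l)"
    by (rule sum.cong) (auto simp: c' cinner_orthonormal_sum[OF assms(1,2)])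
  then show ?thesis using c' by simp
qed

lemma parseval:
  fixes e :: "'i \<Rightarrow> complex^'n::finite"
  assumes "orthonormal_on e L" "finite L" "card L = CARD('n)"
  shows "cinner u v = (\<Sum>l\<in>L. cnj (cinner (e l) u) * cinner (e l) v)"
proof -
  have "cinner u v = cinner (\<Sum>l\<in>L. cinner (e l) u *s e l) v"
    using orthonormal_on_expansion[OF assms, of u] by simp
  then show ?thesis by (simp add: cinner_sum_left cinner_scale_left)
qed

lemma parseval_norm:
  fixes \<alpha> :: "'a::finite \<Rightarrow> complex^'a"
  assumes "orthonormal_basis \<alpha>"
  shows "(\<Sum>a\<in>UNIV. (cmod (cinner u (\<alpha> a)))\<^sup>2) = Re (cinner u u)"
proof -
  have "cinner u u = (\<Sum>a\<in>UNIV. complex_of_real ((cmod (cinner u (\<alpha> a)))\<^sup>2))"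
    using parseval[of \<alpha> UNIV u u] assms
    by (simp add: orthonormal_on_UNIV_iff cnj_mult_self cinner_cnj[of "\<alpha> _" u, symmetric])
  then show ?thesis by (simp add: Re_sum)
qed

lemma bessel_inequality:
  assumes "orthonormal_on e L" "finite L"
  shows "(\<Sum>l\<in>L. (cmod (cinner (e l) v))\<^sup>2) \<le> Re (cinner v v)"
proof -
  define p where "p = (\<Sum>l\<in>L. cinner (e l) v *s e l)"
  define s where "s = (\<Sum>l\<in>L. complex_of_real ((cmod (cinner (e l) v))\<^sup>2))"
  have "cinner v p = s"
    by (simp add: p_def s_def cinner_sum_right cinner_scale_right cinner_cnj[of "e _" v, symmetric] mult_cnj_self)
  moreover have "cinner p v = s"
    by (simp add: p_def s_def cinner_sum_left cinner_scale_left cnj_mult_self)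
  moreover have "cinner p p = s"
    by (simp add: p_def s_def cinner_orthonormal_combination[OF assms] cnj_mult_self)
  ultimately have "cinner (v - p) (v - p) = cinner v v - s"
    by (simp add: cinner_diff_left cinner_diff_right)
  then show ?thesis using cinner_self_nonneg[of "v - p"] by (simp add: s_def Re_sum)
qed

lemma orthonormal_on_extend:
  fixes e :: "'i \<Rightarrow> complex^'n::finite"
  assumes "orthonormal_on e L" "finite L" "card L < CARD('n)"
  obtains w where "cinner w w = 1" "\<forall>l\<in>L. cinner (e l) w = 0"
proof -
  have "\<not> (UNIV :: (complex^'n) set) \<subseteq> vec.span (e ` L)"
  proof
    assume "(UNIV :: (complex^'n) set) \<subseteq> vec.span (e ` L)"
    then have "vec.dim (UNIV :: (complex^'n) set) \<le> card (e ` L)"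
      using vec.dim_le_card assms(2) by blast
    then show False
      using assms(3) card_image[OF orthonormal_on_inj[OF assms(1)]] by (simp add: vec_dim_card card_cart_basis)
  qed
  then obtain w0 where w0: "w0 \<notin> vec.span (e ` L)" by auto
  define r where "r = w0 - (\<Sum>l\<in>L. cinner (e l) w0 *s e l)"
  have "(\<Sum>l\<in>L. cinner (e l) w0 *s e l) \<in> vec.span (e ` L)"
    by (intro vec.span_sum vec.span_scale vec.span_base) auto
  then have "r \<noteq> 0" using w0 unfolding r_def by auto
  then obtain s w where w: "s > 0" "cinner w w = 1" "r = complex_of_real s *s w"
    by (rule normalize_vector)
  have "cinner (e m) r = 0" if "m \<in> L" for m
    unfolding r_def cinner_diff_right cinner_orthonormal_sum[OF assms(1,2) that] by simp
  then have "\<forall>l\<in>L. cinner (e l) w = 0" using w by (simp add: cinner_scale_right)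
  with w show thesis using that by blast
qed

lemma orthonormal_on_extend_to:
  fixes x :: "nat \<Rightarrow> complex^'n::finite"
  assumes "orthonormal_on x {..<k}"
  shows "k \<le> m \<Longrightarrow> m \<le> CARD('n) \<Longrightarrow> \<exists>X. orthonormal_on X {..<m} \<and> (\<forall>i<k. X i = x i)"
proof (induction m)
  case 0 then show ?case using assms by auto
next
  case (Suc m)
  show ?case
  proof (cases "k = Suc m")
    case True then show ?thesis using assms by auto
  next
    case False
    then obtain X where X: "orthonormal_on X {..<m}" "\<forall>i<k. X i = x i" using Suc by auto
    obtain w where "cinner w w = 1" "\<forall>l\<in>{..<m}. cinner (X l) w = 0"
      using orthonormal_on_extend[OF X(1)] Suc.prems by auto
    then have "orthonormal_on (X(m := w)) {..<Suc m}" by (intro orthonormal_on_lessThan_Suc X(1)) auto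
    moreover have "\<forall>i<k. (X(m := w)) i = x i" using X(2) False Suc.prems by auto
    ultimately show ?thesis by blast
  qed
qed

lemma orthonormal_on_extend_basis:
  fixes x :: "nat \<Rightarrow> complex^'a::finite"
  assumes x: "orthonormal_on x {..<k}"
  obtains \<alpha> j where "orthonormal_basis \<alpha>" "inj_on j {..<k}" "\<And>i. i < k \<Longrightarrow> \<alpha> (j i) = x i"
proof -
  let ?n = "CARD('a)"
  have "k \<le> ?n" using orthonormal_on_card_le[OF x] by simp
  then obtain X where X: "orthonormal_on X {..<?n}" "\<forall>i<k. X i = x i"
    using orthonormal_on_extend_to[OF x] by blast
  define j where "j = from_nat_into (UNIV :: 'a set)"
  have bj: "bij_betw j {..<?n} UNIV"
    unfolding j_def using bij_betw_from_nat_into_finite[of "UNIV :: 'a set"] by simp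
  define g where "g = inv_into {..<?n} j"
  have g: "g a < ?n" "j (g a) = a" for a
    using bij_betw_inv_into[OF bj] bij_betw_inv_into_right[OF bj] by (auto simp: g_def bij_betw_def)
  have "orthonormal_basis (X \<circ> g)"
    unfolding orthonormal_basis_def
  proof (intro allI)
    fix a b
    have "g a = g b \<longleftrightarrow> a = b" using g(2) by metis
    then show "cinner ((X \<circ> g) a) ((X \<circ> g) b) = (if a = b then 1 else 0)"
      using X(1) g(1)[of a] g(1)[of b] by (simp add: orthonormal_on_def)
  qed
  moreover have "inj_on j {..<k}" using bj \<open>k \<le> ?n\<close> by (auto simp: bij_betw_def intro: inj_on_subset)
  moreover have "(X \<circ> g) (j i) = x i" if "i < k" for i
    using bj that \<open>k \<le> ?n\<close> X(2) by (simp add: g_def bij_betw_inv_into_left)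
  ultimately show thesis using that by blast
qed

section \<open>Spectral theorem for Hermitian matrices\<close>

lemma quad_form_continuous: "continuous_on S (\<lambda>v::complex^'n::finite. Re (cinner v (A *v v)))"
  unfolding cinner_def matrix_vector_mult_def by (simp, intro continuous_intros)

lemma quad_form_scale: "cinner (c *s v) (A *v (c *s v)) = cnj c * c * cinner v (A *v v)"
  by (simp add: mult_vec_scale cinner_scale_left cinner_scale_right)

lemma nonpos_quadratic_linear_coeff_0:
  fixes a b :: real
  assumes "\<And>t. a * t + b * t\<^sup>2 \<le> 0"
  shows "a = 0"
proof (rule ccontr)
  assume "a \<noteq> 0"
  define d where "d = \<bar>b\<bar> + 1"
  have d: "d > 0" "d + b > 0" by (auto simp: d_def)
  have "a * (a / d) + b * (a / d)\<^sup>2 = a\<^sup>2 * (d + b) / d\<^sup>2"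
    using d by (simp add: field_simps power2_eq_square)
  moreover have "a\<^sup>2 * (d + b) / d\<^sup>2 > 0"
    using \<open>a \<noteq> 0\<close> d by (intro divide_pos_pos mult_pos_pos) auto
  ultimately show False using assms[of "a / d"] by linarith
qed

text \<open>First-order condition at a maximiser \<open>v\<close> of the Rayleigh quotient on \<open>W\<close>:
  moving along \<open>v + t w\<close> must not increase it.\<close>
lemma rayleigh_maximizer_orthogonal:
  fixes A :: "complex^'n^'n"
  assumes A: "hermitian A" and W: "vec.subspace W" and v: "v \<in> W" "cinner v v = 1"
    and max: "\<And>u. u \<in> W \<Longrightarrow> Re (cinner u (A *v u)) \<le> Re (cinner v (A *v v)) * Re (cinner u u)"
    and w: "w \<in> W" "cinner v w = 0"
  shows "cinner w (A *v v) = 0"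
proof -
  have Re_0: "Re (cinner w (A *v v)) = 0" if w: "w \<in> W" "cinner v w = 0" for w
  proof -
    define a where "a = Re (cinner w (A *v v))"
    define lam where "lam = Re (cinner v (A *v v))"
    have "(2 * a) * t + (Re (cinner w (A *v w)) - lam * Re (cinner w w)) * t\<^sup>2 \<le> 0" for t
    proof -
      define u where "u = v + complex_of_real t *s w"
      have "u \<in> W" unfolding u_def using W v w by (simp add: vec.subspace_add vec.subspace_scale)
      have wv: "cinner w v = 0" using w(2) cinner_cnj[of v w] by simp
      have "Re (cinner v (A *v w)) = a"
        using hermitian_cinner[OF A, of v w] cinner_cnj[of w "A *v v"] unfolding a_def by (metis cnj.sel(1))
      then have "Re (cinner u (A *v u)) = lam + 2 * a * t + t\<^sup>2 * Re (cinner w (A *v w))"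
        unfolding u_def a_def lam_def
        by (simp add: matrix_vector_right_distrib mult_vec_scale cinner_simps power2_eq_square algebra_simps)
      moreover have "Re (cinner u u) = 1 + t\<^sup>2 * Re (cinner w w)"
        unfolding u_def using v(2) w(2) wv by (simp add: cinner_simps power2_eq_square)
      ultimately show ?thesis using max[OF \<open>u \<in> W\<close>] by (simp add: lam_def algebra_simps)
    qed
    then have "2 * a = 0" by (rule nonpos_quadratic_linear_coeff_0)
    then show ?thesis by (simp add: a_def)
  qed
  have "Re (cinner w (A *v v)) = 0" by (rule Re_0[OF w])
  moreover have "Re (cinner (\<i> *s w) (A *v v)) = 0"
    by (rule Re_0) (use W w in \<open>simp_all add: vec.subspace_scale cinner_scale_right\<close>)
  ultimately show ?thesis by (simp add: cinner_scale_left complex_eq_iff)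
qed

lemma rayleigh_maximizer_eigenvector:
  fixes A :: "complex^'n^'n"
  assumes A: "hermitian A" and W: "vec.subspace W" and inv: "\<And>u. u \<in> W \<Longrightarrow> A *v u \<in> W"
    and v: "v \<in> W" "cinner v v = 1"
    and max: "\<And>u. u \<in> W \<Longrightarrow> Re (cinner u (A *v u)) \<le> Re (cinner v (A *v v)) * Re (cinner u u)"
  shows "A *v v = complex_of_real (Re (cinner v (A *v v))) *s v"
proof -
  define \<mu> where "\<mu> = cinner v (A *v v)"
  define r where "r = A *v v - \<mu> *s v"
  have "r \<in> W" unfolding r_def using W inv v by (simp add: vec.subspace_diff vec.subspace_scale)
  moreover have rv: "cinner v r = 0" by (simp add: r_def cinner_simps v(2) \<mu>_def)
  ultimately have "cinner r (A *v v) = 0" by (intro rayleigh_maximizer_orthogonal[OF A W v max])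
  moreover have "cinner r v = 0" using rv cinner_cnj[of v r] by simp
  ultimately have "cinner r r = 0" by (simp add: r_def cinner_diff_right cinner_scale_right)
  then show ?thesis
    using hermitian_quad_real[OF A, of v] by (simp add: cinner_self_eq_0 r_def \<mu>_def)
qed

lemma hermitian_eigenvector_in_invariant_subspace:
  fixes A :: "complex^'n::finite^'n"
  assumes A: "hermitian A" and W: "vec.subspace W" "closed W"
    and inv: "\<And>u. u \<in> W \<Longrightarrow> A *v u \<in> W" and w: "w \<in> W" "cinner w w = 1"
  obtains v \<mu> where "v \<in> W" "cinner v v = 1" "A *v v = complex_of_real \<mu> *s v"
proof -
  define f where "f v = Re (cinner v (A *v v))" for v
  define K where "K = sphere 0 1 \<inter> W"
  have K_iff: "v \<in> K \<longleftrightarrow> v \<in> W \<and> cinner v v = 1" for v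
  proof -
    have "(norm v)\<^sup>2 = 1 \<longleftrightarrow> norm v = 1"
      using norm_ge_zero[of v] power2_eq_1_iff[of "norm v"] by linarith
    then have "cinner v v = 1 \<longleftrightarrow> norm v = 1"
      unfolding cinner_self_norm by (simp only: of_real_eq_1_iff)
    then show ?thesis by (auto simp: K_def dist_norm)
  qed
  have "compact K" unfolding K_def by (rule compact_Int_closed[OF compact_sphere W(2)])
  moreover have "K \<noteq> {}" using w K_iff by auto
  ultimately have "\<exists>v\<in>K. \<forall>y\<in>K. f y \<le> f v"
    unfolding f_def by (rule continuous_attains_sup[OF _ _ quad_form_continuous])
  then obtain v where vK: "v \<in> K" and vmax: "\<And>y. y \<in> K \<Longrightarrow> f y \<le> f v" by blast
  have v: "v \<in> W" "cinner v v = 1" using vK K_iff by auto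
  have max: "f u \<le> f v * Re (cinner u u)" if "u \<in> W" for u
  proof (cases "u = 0")
    case True then show ?thesis by (simp add: f_def)
  next
    case False
    then obtain s u' where u': "s > 0" "cinner u' u' = 1" "u = complex_of_real s *s u'"
      "u' = complex_of_real (1 / s) *s u"
      by (rule normalize_vector)
    have "u' \<in> W" using W(1) \<open>u \<in> W\<close> u'(4) by (simp add: vec.subspace_scale)
    then have "f u' \<le> f v" using K_iff u'(2) vmax by simp
    moreover have "f u = s\<^sup>2 * f u'"
      unfolding f_def u'(3) quad_form_scale by (simp add: power2_eq_square flip: of_real_mult)
    moreover have "Re (cinner u u) = s\<^sup>2"
      unfolding u'(3) by (simp add: cinner_scale_left cinner_scale_right u'(2) power2_eq_square)
    ultimately show ?thesis using u'(1) by (simp add: mult.commute)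
  qed
  have "A *v v = complex_of_real (f v) *s v"
    unfolding f_def by (rule rayleigh_maximizer_eigenvector[OF A W(1) inv v max[unfolded f_def]])
  then show thesis using that[OF v] by blast
qed

lemma hermitian_orthonormal_eigenvectors:
  fixes A :: "complex^'n::finite^'n"
  assumes A: "hermitian A"
  shows "m \<le> CARD('n) \<Longrightarrow>
    \<exists>e \<nu>. orthonormal_on e {..<m} \<and> (\<forall>l<m. A *v e l = complex_of_real (\<nu> l) *s e l)"
proof (induction m)
  case 0 then show ?case by (auto simp: orthonormal_on_def)
next
  case (Suc m)
  then obtain e \<nu> where e: "orthonormal_on e {..<m}"
    and ev: "\<forall>l<m. A *v e l = complex_of_real (\<nu> l) *s e l"
    by auto
  define W where "W = {v::complex^'n. \<forall>l<m. cinner (e l) v = 0}"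
  have "vec.subspace W" by (auto simp: vec.subspace_def W_def cinner_simps)
  moreover have "closed W"
  proof -
    have "W = (\<Inter>l\<in>{..<m}. {v. cinner (e l) v = 0})" unfolding W_def by auto
    then show ?thesis unfolding cinner_def
      by (simp only:) (intro closed_INT ballI closed_Collect_eq continuous_intros)
  qed
  moreover have "A *v u \<in> W" if "u \<in> W" for u
    using that ev by (simp add: W_def hermitian_cinner[OF A] cinner_scale_left)
  moreover obtain w where "cinner w w = 1" "\<forall>l\<in>{..<m}. cinner (e l) w = 0"
    using orthonormal_on_extend[OF e] Suc.prems by auto
  then have "w \<in> W" "cinner w w = 1" by (auto simp: W_def)
  ultimately obtain v \<mu> where v: "v \<in> W" "cinner v v = 1" "A *v v = complex_of_real \<mu> *s v"
    by (rule hermitian_eigenvector_in_invariant_subspace[OF A])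
  have "orthonormal_on (e(m := v)) {..<Suc m}"
    using v by (intro orthonormal_on_lessThan_Suc e) (auto simp: W_def)
  moreover have "\<forall>l<Suc m. A *v (e(m := v)) l = complex_of_real ((\<nu>(m := \<mu>)) l) *s (e(m := v)) l"
    using ev v by (auto simp: less_Suc_eq)
  ultimately show ?case by blast
qed

section \<open>Diagonal operators and square roots\<close>

definition diag_op :: "('i \<Rightarrow> complex^'n) \<Rightarrow> 'i set \<Rightarrow> ('i \<Rightarrow> real) \<Rightarrow> complex^'n^'n" where
  "diag_op e L c = (\<Sum>l\<in>L. c l *\<^sub>R outer (e l) (e l))"

lemma diag_op_mult_vec: "diag_op e L c *v v = (\<Sum>l\<in>L. (complex_of_real (c l) * cinner (e l) v) *s e l)"
  by (simp add: diag_op_def sum_mult_vec scaleR_mult_vec outer_mult_vec vector_smult_assoc)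

lemma diag_op_mult_vec_basis:
  assumes "orthonormal_on e L" "finite L" "m \<in> L"
  shows "diag_op e L c *v e m = complex_of_real (c m) *s e m"
proof -
  have "(\<Sum>l\<in>L. (complex_of_real (c l) * cinner (e l) (e m)) *s e l)
      = (\<Sum>l\<in>L. if l = m then complex_of_real (c m) *s e m else 0)"
    using assms by (intro sum.cong) (auto simp: orthonormal_on_def)
  then show ?thesis using assms by (simp add: diag_op_mult_vec sum.delta')
qed

lemma diag_op_quad:
  "cinner v (diag_op e L c *v v) = complex_of_real (\<Sum>l\<in>L. c l * (cmod (cinner (e l) v))\<^sup>2)"
proof -
  have "cinner v (diag_op e L c *v v)
      = (\<Sum>l\<in>L. complex_of_real (c l) * (cnj (cinner (e l) v) * cinner (e l) v))"
    unfolding diag_op_mult_vec cinner_sum_right cinner_scale_right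
    by (intro sum.cong refl) (simp add: cinner_cnj[of "e _" v, symmetric])
  then show ?thesis by (simp add: cnj_mult_self)
qed

lemma cinner_diag_op_mult_vec_self:
  assumes "orthonormal_on e L" "finite L"
  shows "cinner (diag_op e L c *v v) (diag_op e L c *v v)
    = complex_of_real (\<Sum>l\<in>L. (c l)\<^sup>2 * (cmod (cinner (e l) v))\<^sup>2)"
proof -
  have "cnj (complex_of_real r * z) * (complex_of_real r * z) = complex_of_real (r\<^sup>2 * (cmod z)\<^sup>2)"
    for r z
  proof -
    have "cnj (complex_of_real r * z) * (complex_of_real r * z) = complex_of_real (r\<^sup>2) * (cnj z * z)"
      by (simp add: power2_eq_square ac_simps)
    then show ?thesis by (simp only: cnj_mult_self of_real_mult)
  qed
  then show ?thesis
    unfolding diag_op_mult_vec cinner_orthonormal_combination[OF assms] by simp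
qed

lemma diag_op_psd: "(\<And>l. l \<in> L \<Longrightarrow> c l \<ge> 0) \<Longrightarrow> psd (diag_op e L c)"
  unfolding psd_def diag_op_quad by (auto intro!: sum_nonneg)

lemma diag_op_mult:
  assumes "orthonormal_on e L" "finite L"
  shows "diag_op e L c ** diag_op e L d = diag_op e L (\<lambda>l. c l * d l)"
proof (subst matrix_eq, intro allI)
  fix v
  have "(diag_op e L c ** diag_op e L d) *v v = diag_op e L c *v (diag_op e L d *v v)"
    by (simp add: matrix_vector_mul_assoc)
  also have "\<dots> = (\<Sum>l\<in>L. (complex_of_real (d l) * cinner (e l) v) *s (complex_of_real (c l) *s e l))"
    by (simp add: diag_op_mult_vec[of e L d] mult_vec_sum mult_vec_scale diag_op_mult_vec_basis[OF assms])
  also have "\<dots> = diag_op e L (\<lambda>l. c l * d l) *v v"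
    by (simp add: diag_op_mult_vec vector_smult_assoc ac_simps)
  finally show "(diag_op e L c ** diag_op e L d) *v v = diag_op e L (\<lambda>l. c l * d l) *v v" .
qed

lemma diag_op_trace:
  assumes "orthonormal_on e L"
  shows "mtrace (diag_op e L c) = complex_of_real (sum c L)"
  using assms by (simp add: diag_op_def mtrace_sum mtrace_scaleR mtrace_outer orthonormal_on_def)

lemma hermitian_diag_op:
  fixes A :: "complex^'n::finite^'n"
  assumes "hermitian A"
  obtains e \<nu> where "orthonormal_on e {..<CARD('n)}" "A = diag_op e {..<CARD('n)} \<nu>"
proof -
  obtain e \<nu> where e: "orthonormal_on e {..<CARD('n)}"
    and ev: "\<forall>l<CARD('n). A *v e l = complex_of_real (\<nu> l) *s e l"
    using hermitian_orthonormal_eigenvectors[OF assms] by blast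
  have "A = diag_op e {..<CARD('n)} \<nu>"
  proof (subst matrix_eq, intro allI)
    fix v
    have "A *v v = A *v (\<Sum>l<CARD('n). cinner (e l) v *s e l)"
      using orthonormal_on_expansion[OF e, of v] by simp
    also have "\<dots> = diag_op e {..<CARD('n)} \<nu> *v v"
      by (simp add: mult_vec_sum mult_vec_scale ev diag_op_mult_vec vector_smult_assoc ac_simps)
    finally show "A *v v = diag_op e {..<CARD('n)} \<nu> *v v" .
  qed
  with e show thesis using that by blast
qed

lemma psd_diag_op:
  fixes A :: "complex^'n::finite^'n"
  assumes "psd A"
  obtains e \<nu> where "orthonormal_on e {..<CARD('n)}" "A = diag_op e {..<CARD('n)} \<nu>" "\<And>l. \<nu> l \<ge> 0"
proof -
  obtain e \<nu> where e: "orthonormal_on e {..<CARD('n)}" and A: "A = diag_op e {..<CARD('n)} \<nu>"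
    using hermitian_diag_op[OF psd_hermitian[OF assms]] by blast
  have nonneg: "\<nu> l \<ge> 0" if "l < CARD('n)" for l
  proof -
    have "cinner (e l) (A *v e l) = complex_of_real (\<nu> l)"
      using e that by (simp add: A diag_op_mult_vec_basis cinner_scale_right orthonormal_on_def)
    then show ?thesis using assms unfolding psd_def by (metis Re_complex_of_real)
  qed
  define \<nu>' where "\<nu>' l = (if l < CARD('n) then \<nu> l else 0)" for l
  have "A = diag_op e {..<CARD('n)} \<nu>'"
    unfolding A diag_op_def by (intro sum.cong) (auto simp: \<nu>'_def)
  moreover have "\<nu>' l \<ge> 0" for l using nonneg by (simp add: \<nu>'_def)
  ultimately show thesis using that e by blast
qed

text \<open>If \<open>B\<^sup>2 v = c v\<close> with \<open>c > 0\<close>, then \<open>u = B v - \<surd>c v\<close> satisfies \<open>(B + \<surd>c) u = 0\<close>, which forces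
  \<open>u = 0\<close> because \<open>B + \<surd>c\<close> is positive definite.\<close>
lemma psd_sqrt_eigenvector:
  fixes B :: "complex^'n::finite^'n"
  assumes B: "psd B" and BB: "B *v (B *v v) = complex_of_real c *s v" and c: "c \<ge> 0"
  shows "B *v v = complex_of_real (sqrt c) *s v"
proof (cases "c = 0")
  case True
  have "cinner (B *v v) (B *v v) = cinner v (B *v (B *v v))"
    by (simp add: hermitian_cinner[OF psd_hermitian[OF B]])
  then show ?thesis using BB True by (simp add: cinner_self_eq_0)
next
  case False
  define s where "s = sqrt c"
  have s: "s > 0" "s * s = c" using c False unfolding s_def by auto
  define u where "u = B *v v - complex_of_real s *s v"
  have "B *v u + complex_of_real s *s u = B *v (B *v v) - complex_of_real (s * s) *s v"
    unfolding u_def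
    by (simp add: matrix_vector_mult_diff_distrib mult_vec_scale algebra_simps vector_smult_assoc
        vector_ssub_ldistrib)
  then have "B *v u + complex_of_real s *s u = 0" using BB s by simp
  then have "Re (cinner u (B *v u + complex_of_real s *s u)) = 0" by simp
  then have "Re (cinner u (B *v u)) + s * Re (cinner u u) = 0"
    by (simp add: cinner_add_right cinner_scale_right)
  moreover have "Re (cinner u (B *v u)) \<ge> 0" using B by (simp add: psd_def)
  moreover have "s * Re (cinner u u) \<ge> 0" using s(1) cinner_self_nonneg[of u] by simp
  ultimately have "s * Re (cinner u u) = 0" by linarith
  then have "Re (cinner u u) = 0" using s(1) by simp
  then have "u = 0" using cinner_self_real[of u] by (simp add: cinner_self_eq_0)
  then show ?thesis unfolding u_def s_def by simp
qed

lemma psd_sqrt_diag_op: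
  fixes B :: "complex^'n::finite^'n"
  assumes B: "psd B" and BB: "B ** B = diag_op e {..<CARD('n)} \<nu>"
    and e: "orthonormal_on e {..<CARD('n)}" and nonneg: "\<And>l. \<nu> l \<ge> 0"
  shows "B = diag_op e {..<CARD('n)} (\<lambda>l. sqrt (\<nu> l))"
proof (subst matrix_eq, intro allI)
  fix v
  have Be: "B *v e l = complex_of_real (sqrt (\<nu> l)) *s e l" if "l < CARD('n)" for l
    using that by (intro psd_sqrt_eigenvector[OF B _ nonneg])
      (simp add: matrix_vector_mul_assoc BB diag_op_mult_vec_basis[OF e])
  have "B *v v = B *v (\<Sum>l<CARD('n). cinner (e l) v *s e l)"
    using orthonormal_on_expansion[OF e, of v] by simp
  also have "\<dots> = diag_op e {..<CARD('n)} (\<lambda>l. sqrt (\<nu> l)) *v v"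
    by (simp add: mult_vec_sum mult_vec_scale Be diag_op_mult_vec vector_smult_assoc ac_simps)
  finally show "B *v v = diag_op e {..<CARD('n)} (\<lambda>l. sqrt (\<nu> l)) *v v" .
qed

lemma psd_sqrt_exists:
  fixes A :: "complex^'n::finite^'n"
  assumes "psd A"
  shows "\<exists>B. psd B \<and> B ** B = A"
proof -
  obtain e \<nu> where e: "orthonormal_on e {..<CARD('n)}" and A: "A = diag_op e {..<CARD('n)} \<nu>"
    and nonneg: "\<And>l. \<nu> l \<ge> 0"
    using psd_diag_op[OF assms] by blast
  let ?B = "diag_op e {..<CARD('n)} (\<lambda>l. sqrt (\<nu> l))"
  have "psd ?B" by (rule diag_op_psd) (use nonneg in simp)
  moreover have "?B ** ?B = A" unfolding A diag_op_mult[OF e finite_lessThan]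
    using nonneg by (simp add: real_sqrt_mult[symmetric])
  ultimately show ?thesis by blast
qed

lemma psd_sqrt_unique:
  fixes A :: "complex^'n::finite^'n"
  assumes "psd B" "B ** B = A" "psd C" "C ** C = A"
  shows "B = C"
proof -
  have "cinner v (A *v v) = cinner (B *v v) (B *v v)" for v
    using hermitian_cinner[OF psd_hermitian[OF assms(1)]] assms(2) by (metis matrix_vector_mul_assoc)
  then have "psd A" unfolding psd_def by (metis cinner_self_nonneg cinner_self_real Im_complex_of_real)
  then obtain e \<nu> where e: "orthonormal_on e {..<CARD('n)}" and A: "A = diag_op e {..<CARD('n)} \<nu>"
    and nonneg: "\<And>l. \<nu> l \<ge> 0"
    using psd_diag_op by blast
  show ?thesis
    using psd_sqrt_diag_op[OF assms(1) _ e nonneg] psd_sqrt_diag_op[OF assms(3) _ e nonneg] assms A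
    by simp
qed

lemma msqrt_eqI:
  fixes A :: "complex^'n::finite^'n"
  assumes "psd B" "B ** B = A"
  shows "msqrt A = B"
  unfolding msqrt_def by (rule the_equality) (use assms psd_sqrt_unique in blast)+

lemma msqrt_correct:
  fixes A :: "complex^'n::finite^'n"
  assumes "psd A"
  shows "psd (msqrt A) \<and> msqrt A ** msqrt A = A"
  using psd_sqrt_exists[OF assms] msqrt_eqI by metis

lemma msqrt_zero: "msqrt (0::complex^'n::finite^'n) = 0"
  by (rule msqrt_eqI) (auto simp: psd_def)

lemma msqrt_diag_op:
  fixes e :: "'i \<Rightarrow> complex^'n::finite"
  assumes "orthonormal_on e L" "finite L" "\<And>l. l \<in> L \<Longrightarrow> c l \<ge> 0"
  shows "msqrt (diag_op e L c) = diag_op e L (\<lambda>l. sqrt (c l))"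
proof (rule msqrt_eqI)
  show "psd (diag_op e L (\<lambda>l. sqrt (c l)))" by (rule diag_op_psd) (use assms in auto)
  have "diag_op e L (\<lambda>l. sqrt (c l) * sqrt (c l)) = diag_op e L c"
    unfolding diag_op_def by (intro sum.cong) (use assms in \<open>auto simp: real_sqrt_mult[symmetric]\<close>)
  then show "diag_op e L (\<lambda>l. sqrt (c l)) ** diag_op e L (\<lambda>l. sqrt (c l)) = diag_op e L c"
    by (simp add: diag_op_mult[OF assms(1,2)])
qed

lemma diag_op_quad_le:
  fixes e :: "'i \<Rightarrow> complex^'n::finite"
  assumes e: "orthonormal_on e L" "finite L" "card L = CARD('n)" and le: "\<And>l. l \<in> L \<Longrightarrow> d l \<le> 1"
  shows "Re (cinner w (diag_op e L d *v w)) \<le> Re (cinner w w)"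
proof -
  have "Re (cinner w (diag_op e L d *v w)) = (\<Sum>l\<in>L. d l * (cmod (cinner (e l) w))\<^sup>2)"
    by (simp add: diag_op_quad)
  also have "\<dots> \<le> (\<Sum>l\<in>L. (cmod (cinner (e l) w))\<^sup>2)"
    using le by (intro sum_mono) (simp add: mult_le_cancel_right2)
  also have "\<dots> = Re (cinner w w)"
    using parseval[OF e, of w w] by (simp add: cnj_mult_self Re_sum)
  finally show ?thesis .
qed

lemma density_quad_bounds:
  fixes R :: "complex^'n::finite^'n"
  assumes "density R"
  shows "Re (cinner w (R *v w)) \<le> Re (cinner w w)"
    and "Re (cinner w (msqrt R *v w)) \<le> Re (cinner w w)"
    and "Re (cinner w (msqrt R *v w)) \<ge> 0"
proof -
  have R: "psd R" "mtrace R = 1" using assms by (auto simp: density_def)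
  obtain e \<nu> where e: "orthonormal_on e {..<CARD('n)}" and A: "R = diag_op e {..<CARD('n)} \<nu>"
    and nonneg: "\<And>l. \<nu> l \<ge> 0"
    using psd_diag_op[OF R(1)] by blast
  have "complex_of_real (sum \<nu> {..<CARD('n)}) = 1" using R(2) diag_op_trace[OF e, of \<nu>] A by simp
  then have "sum \<nu> {..<CARD('n)} = 1" by (simp only: of_real_eq_1_iff)
  then have le1: "\<nu> l \<le> 1" if "l \<in> {..<CARD('n)}" for l
    using member_le_sum[OF that, of \<nu>] nonneg by simp
  then show "Re (cinner w (R *v w)) \<le> Re (cinner w w)"
    unfolding A by (intro diag_op_quad_le[OF e]) auto
  have "msqrt R = diag_op e {..<CARD('n)} (\<lambda>l. sqrt (\<nu> l))"
    unfolding A by (rule msqrt_diag_op[OF e]) (use nonneg in auto)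
  then show "Re (cinner w (msqrt R *v w)) \<le> Re (cinner w w)"
    by (simp only:) (intro diag_op_quad_le[OF e], use le1 in auto)
  show "Re (cinner w (msqrt R *v w)) \<ge> 0" using msqrt_correct[OF R(1)] by (simp add: psd_def)
qed

section \<open>Bipartite systems and classical-quantum states\<close>

lemma sum_pair_UNIV: "(\<Sum>p\<in>(UNIV::('a::finite \<times> 'b::finite) set). f p) = (\<Sum>a\<in>UNIV. \<Sum>b\<in>UNIV. f (a, b))"
  by (simp add: sum.cartesian_product flip: UNIV_Times_UNIV)

text \<open>\<open>partial_inner u v\<close> is \<open>(\<langle>u| \<otimes> 1) v\<close>.\<close>
definition partial_inner :: "complex^'a \<Rightarrow> complex^('a::finite \<times> 'b::finite) \<Rightarrow> complex^'b" where
  "partial_inner u v = (\<chi> b. \<Sum>a\<in>UNIV. cnj (u$a) * v$(a, b))"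

lemma partial_inner_scale: "partial_inner u (c *s v) = c *s partial_inner u v"
  by (simp add: partial_inner_def vec_eq_iff sum_distrib_left ac_simps)
lemma partial_inner_sum: "partial_inner u (sum f S) = (\<Sum>x\<in>S. partial_inner u (f x))"
  by (simp add: partial_inner_def vec_eq_iff sum_component sum_distrib_left) (rule allI, rule sum.swap)
lemma partial_inner_tensor: "partial_inner u (tensor_vec x y) = cinner u x *s y"
  by (simp add: partial_inner_def tensor_vec_def vec_eq_iff cinner_def sum_distrib_right sum_distrib_left ac_simps)

lemma cinner_tensor: "cinner v (tensor_vec u w) = cinner (partial_inner u v) w"
proof -
  have "cinner v (tensor_vec u w) = (\<Sum>a\<in>UNIV. \<Sum>b\<in>UNIV. cnj (v$(a,b)) * (u$a * w$b))"
    by (simp add: cinner_def tensor_vec_def sum_pair_UNIV)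
  also have "\<dots> = (\<Sum>b\<in>UNIV. \<Sum>a\<in>UNIV. cnj (v$(a,b)) * (u$a * w$b))" by (rule sum.swap)
  also have "\<dots> = cinner (partial_inner u v) w"
    by (simp add: cinner_def partial_inner_def sum_distrib_right sum_distrib_left ac_simps)
  finally show ?thesis .
qed

lemma cinner_tensor_vec: "cinner (tensor_vec x y) (tensor_vec x' y') = cinner x x' * cinner y y'"
  by (simp add: cinner_tensor partial_inner_tensor cinner_scale_left cinner_cnj)

lemma tensor_mat_outer_mult_vec: "tensor_mat (outer u u) R *v v = tensor_vec u (R *v partial_inner u v)"
proof -
  have "(tensor_mat (outer u u) R *v v) $ (a, b) = (tensor_vec u (R *v partial_inner u v)) $ (a, b)" for a b
  proof -
    have "(tensor_mat (outer u u) R *v v) $ (a, b)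
        = (\<Sum>a'\<in>UNIV. \<Sum>b'\<in>UNIV. u$a * cnj (u$a') * R$b$b' * v$(a',b'))"
      by (simp add: matrix_vector_mult_def tensor_mat_def outer_def sum_pair_UNIV)
    also have "\<dots> = (\<Sum>b'\<in>UNIV. \<Sum>a'\<in>UNIV. u$a * cnj (u$a') * R$b$b' * v$(a',b'))"
      by (rule sum.swap)
    also have "\<dots> = (tensor_vec u (R *v partial_inner u v)) $ (a, b)"
      by (simp add: tensor_vec_def matrix_vector_mult_def partial_inner_def sum_distrib_left ac_simps)
    finally show ?thesis .
  qed
  then show ?thesis by (simp add: vec_eq_iff)
qed

lemma tensor_vec_scale_right: "tensor_vec u (c *s w) = c *s tensor_vec u w"
  by (simp add: tensor_vec_def vec_eq_iff ac_simps)

lemma tensor_mat_outer: "tensor_mat (outer x x) (outer y y) = outer (tensor_vec x y) (tensor_vec x y)"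
  by (simp add: tensor_mat_def outer_def tensor_vec_def vec_eq_iff ac_simps)

definition cq_op :: "('a \<Rightarrow> complex^'a) \<Rightarrow> ('a \<Rightarrow> real) \<Rightarrow> ('a \<Rightarrow> complex^'b^'b)
    \<Rightarrow> complex^('a::finite \<times> 'b::finite)^('a \<times> 'b)" where
  "cq_op \<alpha> c M = (\<Sum>a\<in>UNIV. c a *\<^sub>R tensor_mat (outer (\<alpha> a) (\<alpha> a)) (M a))"

lemma cinner_ptrace_b_outer:
  fixes \<psi> :: "complex^('a::finite \<times> 'b::finite)"
  shows "cinner u (ptrace_b (outer \<psi> \<psi>) *v u') = cinner (partial_inner u' \<psi>) (partial_inner u \<psi>)"
proof -
  have "cinner u (ptrace_b (outer \<psi> \<psi>) *v u')
      = (\<Sum>i\<in>UNIV. \<Sum>i'\<in>UNIV. \<Sum>j\<in>UNIV. cnj (u$i) * (\<psi>$(i,j) * cnj (\<psi>$(i',j)) * u'$i'))"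
    by (simp add: cinner_def matrix_vector_mult_def ptrace_b_def outer_def sum_distrib_left sum_distrib_right)
  also have "\<dots> = (\<Sum>i\<in>UNIV. \<Sum>j\<in>UNIV. \<Sum>i'\<in>UNIV. cnj (u$i) * (\<psi>$(i,j) * cnj (\<psi>$(i',j)) * u'$i'))"
    by (intro sum.cong refl sum.swap)
  also have "\<dots> = (\<Sum>j\<in>UNIV. \<Sum>i\<in>UNIV. \<Sum>i'\<in>UNIV. cnj (u$i) * (\<psi>$(i,j) * cnj (\<psi>$(i',j)) * u'$i'))"
    by (rule sum.swap)
  also have "\<dots> = cinner (partial_inner u' \<psi>) (partial_inner u \<psi>)"
    by (simp add: cinner_def partial_inner_def sum_distrib_left sum_distrib_right cnj_sum ac_simps)
  finally show ?thesis .
qed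

lemma cq_op_mult_vec: "cq_op \<alpha> c M *v v = (\<Sum>a\<in>UNIV. complex_of_real (c a) *s tensor_vec (\<alpha> a) (M a *v partial_inner (\<alpha> a) v))"
  by (simp add: cq_op_def sum_mult_vec scaleR_mult_vec tensor_mat_outer_mult_vec)

lemma cq_op_quad: "cinner v (cq_op \<alpha> c M *v v) = (\<Sum>a\<in>UNIV. complex_of_real (c a) * cinner (partial_inner (\<alpha> a) v) (M a *v partial_inner (\<alpha> a) v))"
  by (simp add: cq_op_mult_vec cinner_sum_right cinner_scale_right cinner_tensor)

lemma partial_inner_cq_op:
  assumes "orthonormal_on \<alpha> UNIV"
  shows "partial_inner (\<alpha> b) (cq_op \<alpha> c M *v v) = complex_of_real (c b) *s (M b *v partial_inner (\<alpha> b) v)"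
proof -
  have "partial_inner (\<alpha> b) (cq_op \<alpha> c M *v v) = (\<Sum>a\<in>UNIV. (complex_of_real (c a) * cinner (\<alpha> b) (\<alpha> a)) *s (M a *v partial_inner (\<alpha> a) v))"
    by (simp add: cq_op_mult_vec partial_inner_sum partial_inner_scale partial_inner_tensor vector_smult_assoc)
  also have "\<dots> = (\<Sum>a\<in>UNIV. if a = b then complex_of_real (c b) *s (M b *v partial_inner (\<alpha> b) v) else 0)"
    using assms by (intro sum.cong) (auto simp: orthonormal_on_def)
  finally show ?thesis by simp
qed

lemma cq_op_mult:
  assumes "orthonormal_on \<alpha> UNIV"
  shows "cq_op \<alpha> c M ** cq_op \<alpha> d N = cq_op \<alpha> (\<lambda>a. c a * d a) (\<lambda>a. M a ** N a)"
proof (subst matrix_eq, intro allI)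
  fix v
  have "(cq_op \<alpha> c M ** cq_op \<alpha> d N) *v v = cq_op \<alpha> c M *v (cq_op \<alpha> d N *v v)"
    by (simp add: matrix_vector_mul_assoc)
  also have "\<dots> = cq_op \<alpha> (\<lambda>a. c a * d a) (\<lambda>a. M a ** N a) *v v"
    unfolding cq_op_mult_vec[of \<alpha> c M] partial_inner_cq_op[OF assms]
    by (simp add: cq_op_mult_vec mult_vec_scale tensor_vec_scale_right vector_smult_assoc matrix_vector_mul_assoc)
  finally show "(cq_op \<alpha> c M ** cq_op \<alpha> d N) *v v = cq_op \<alpha> (\<lambda>a. c a * d a) (\<lambda>a. M a ** N a) *v v" .
qed

lemma cq_op_psd:
  assumes "\<And>a. c a \<ge> 0" "\<And>a. psd (M a)"
  shows "psd (cq_op \<alpha> c M)"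
  unfolding psd_def cq_op_quad
proof
  fix v
  have h: "Im (cinner (partial_inner (\<alpha> a) v) (M a *v partial_inner (\<alpha> a) v)) = 0 \<and> Re (cinner (partial_inner (\<alpha> a) v) (M a *v partial_inner (\<alpha> a) v)) \<ge> 0" for a
    using assms(2)[of a] by (simp add: psd_def)
  show "Im (\<Sum>a\<in>UNIV. complex_of_real (c a) * cinner (partial_inner (\<alpha> a) v) (M a *v partial_inner (\<alpha> a) v)) = 0 \<and>
        0 \<le> Re (\<Sum>a\<in>UNIV. complex_of_real (c a) * cinner (partial_inner (\<alpha> a) v) (M a *v partial_inner (\<alpha> a) v))"
    using h assms(1) by (simp add: Im_sum Re_sum sum_nonneg)
qed

lemma cq_op_msqrt:
  assumes "orthonormal_on \<alpha> UNIV" "\<And>a. c a \<ge> 0" "\<And>a. density (M a)"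
  shows "msqrt (cq_op \<alpha> c M) = cq_op \<alpha> (\<lambda>a. sqrt (c a)) (\<lambda>a. msqrt (M a))"
proof (rule msqrt_eqI)
  have ps: "psd (M a)" for a using assms(3) by (simp add: density_def)
  show "psd (cq_op \<alpha> (\<lambda>a. sqrt (c a)) (\<lambda>a. msqrt (M a)))"
    by (rule cq_op_psd) (use msqrt_correct[OF ps] assms(2) in auto)
  show "cq_op \<alpha> (\<lambda>a. sqrt (c a)) (\<lambda>a. msqrt (M a)) ** cq_op \<alpha> (\<lambda>a. sqrt (c a)) (\<lambda>a. msqrt (M a)) = cq_op \<alpha> c M"
    unfolding cq_op_mult[OF assms(1)] using msqrt_correct[OF ps] assms(2)
    by (simp add: real_sqrt_mult[symmetric])
qed

lemma cq_states_iff: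
  "\<sigma> \<in> cq_states \<alpha> \<longleftrightarrow>
    (\<exists>p \<sigma>s. (\<forall>i. p i \<ge> 0) \<and> sum p UNIV = 1 \<and> (\<forall>i. density (\<sigma>s i)) \<and> \<sigma> = cq_op \<alpha> p \<sigma>s)"
  by (simp add: cq_states_def cq_op_def)

lemma cq_states_nonempty: "cq_states \<alpha> \<noteq> ({} :: (complex^('a::finite \<times> 'b::finite)^('a \<times> 'b)) set)"
proof -
  define e :: "complex^'b" where "e = axis undefined 1"
  have "density (outer e e)" by (rule outer_density) (simp add: e_def cinner_axis_left)
  then have "cq_op \<alpha> (\<lambda>_. 1 / real CARD('a)) (\<lambda>_. outer e e) \<in> cq_states \<alpha>"
    unfolding cq_states_iff by (intro exI[of _ "\<lambda>_. 1 / real CARD('a)"] exI[of _ "\<lambda>_. outer e e"]) simp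
  then show ?thesis by blast
qed

lemma cq_states_reindex:
  fixes x :: "'i \<Rightarrow> complex^'a::finite" and R :: "'i \<Rightarrow> complex^'b::finite^'b"
  assumes j: "inj_on j I" and x: "\<And>i. i \<in> I \<Longrightarrow> \<alpha> (j i) = x i"
    and F: "\<And>i. i \<in> I \<Longrightarrow> F i \<ge> 0" "(\<Sum>i\<in>I. F i) = 1" and R: "\<And>i. i \<in> I \<Longrightarrow> density (R i)"
  shows "(\<Sum>i\<in>I. F i *\<^sub>R tensor_mat (outer (x i) (x i)) (R i)) \<in> cq_states \<alpha>"
proof -
  have "I \<noteq> {}" using F(2) by auto
  then obtain i0 where "i0 \<in> I" by blast
  define g where "g = the_inv_into I j"
  have g: "g (j i) = i" if "i \<in> I" for i unfolding g_def by (rule the_inv_into_f_f[OF j that])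
  have reindex: "(\<Sum>a\<in>UNIV. if a \<in> j ` I then h a else 0) = (\<Sum>i\<in>I. h (j i))"
    for h :: "'a \<Rightarrow> 'c::comm_monoid_add"
  proof -
    have "(\<Sum>a\<in>UNIV. if a \<in> j ` I then h a else 0) = sum h (UNIV \<inter> j ` I)"
      by (rule sum.inter_restrict[symmetric]) simp
    then show ?thesis by (simp add: sum.reindex[OF j])
  qed
  define p where "p a = (if a \<in> j ` I then F (g a) else 0)" for a
  define \<sigma>s where "\<sigma>s a = (if a \<in> j ` I then R (g a) else R i0)" for a
  have "sum p UNIV = (\<Sum>i\<in>I. F (g (j i)))" unfolding p_def by (rule reindex)
  then have "sum p UNIV = 1" using F(2) g by simp
  moreover have "\<forall>a. p a \<ge> 0" using F(1) g by (auto simp: p_def)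
  moreover have "\<forall>a. density (\<sigma>s a)" using R g \<open>i0 \<in> I\<close> by (auto simp: \<sigma>s_def)
  moreover have "cq_op \<alpha> p \<sigma>s = (\<Sum>i\<in>I. F i *\<^sub>R tensor_mat (outer (x i) (x i)) (R i))"
  proof -
    have "cq_op \<alpha> p \<sigma>s = (\<Sum>a\<in>UNIV. if a \<in> j ` I
        then F (g a) *\<^sub>R tensor_mat (outer (\<alpha> a) (\<alpha> a)) (R (g a)) else 0)"
      unfolding cq_op_def by (intro sum.cong) (simp_all add: p_def \<sigma>s_def)
    also have "\<dots> = (\<Sum>i\<in>I. F (g (j i)) *\<^sub>R tensor_mat (outer (\<alpha> (j i)) (\<alpha> (j i))) (R (g (j i))))"
      by (rule reindex)
    also have "\<dots> = (\<Sum>i\<in>I. F i *\<^sub>R tensor_mat (outer (x i) (x i)) (R i))"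
      by (rule sum.cong) (simp_all add: g x)
    finally show ?thesis .
  qed
  ultimately show ?thesis unfolding cq_states_iff by (intro exI[of _ p] exI[of _ \<sigma>s]) simp
qed

lemma mtrace_msqrt_outer:
  fixes \<phi> :: "complex^'n::finite"
  shows "mtrace (msqrt (outer \<phi> \<phi>)) = complex_of_real (sqrt (Re (cinner \<phi> \<phi>)))"
proof (cases "\<phi> = 0")
  case True then show ?thesis by (simp add: msqrt_zero mtrace_def)
next
  case False
  then obtain s u where s: "s > 0" and u: "cinner u u = 1" and \<phi>: "\<phi> = complex_of_real s *s u"
    by (rule normalize_vector)
  have o: "orthonormal_on (\<lambda>_::unit. u) {()}" using u by (simp add: orthonormal_on_def)
  have "outer \<phi> \<phi> = diag_op (\<lambda>_. u) {()} (\<lambda>_. s\<^sup>2)"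
    using s by (simp add: \<phi> outer_scale diag_op_def)
  moreover have "msqrt (diag_op (\<lambda>_. u) {()} (\<lambda>_. s\<^sup>2)) = diag_op (\<lambda>_. u) {()} (\<lambda>_. s)"
    using msqrt_diag_op[OF o, of "\<lambda>_. s\<^sup>2"] s by simp
  moreover have "Re (cinner \<phi> \<phi>) = s\<^sup>2"
    by (simp add: \<phi> u cinner_scale_left cinner_scale_right power2_eq_square)
  ultimately show ?thesis using s diag_op_trace[OF o] by simp
qed

lemma fidelity_pure:
  fixes \<psi> :: "complex^'n::finite"
  assumes "psd \<sigma>"
  shows "fidelity (outer \<psi> \<psi>) \<sigma> = sqrt (Re (cinner \<psi> (\<sigma> *v \<psi>)))"
proof -
  define S where "S = msqrt \<sigma>"
  have S: "psd S" "S ** S = \<sigma>" using msqrt_correct[OF assms] by (auto simp: S_def)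
  have "adj S = S" using psd_hermitian[OF S(1)] by (simp add: hermitian_def)
  then have "S ** outer \<psi> \<psi> ** S = outer (S *v \<psi>) (S *v \<psi>)"
    by (simp add: outer_mult_left outer_mult_right)
  moreover have "cinner (S *v \<psi>) (S *v \<psi>) = cinner \<psi> (\<sigma> *v \<psi>)"
    using hermitian_cinner[OF psd_hermitian[OF S(1)], of \<psi> "S *v \<psi>"] S(2)
    by (simp add: matrix_vector_mul_assoc)
  ultimately show ?thesis unfolding fidelity_def S_def[symmetric] by (simp add: mtrace_msqrt_outer)
qed

lemma affinity_pure:
  fixes \<psi> :: "complex^'n::finite"
  assumes "cinner \<psi> \<psi> = 1"
  shows "affinity (outer \<psi> \<psi>) \<sigma> = Re (cinner \<psi> (msqrt \<sigma> *v \<psi>))"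
proof -
  have "msqrt (outer \<psi> \<psi>) = outer \<psi> \<psi>"
    by (rule msqrt_eqI) (simp_all add: outer_psd outer_mult_left outer_mult_vec assms)
  then show ?thesis by (simp add: affinity_def mtrace_outer_mult)
qed

lemma C_cc_eq_attained:
  assumes opt: "eigenbasis (ptrace_b \<rho>) \<alpha>\<^sub>0" "\<sigma>\<^sub>0 \<in> cq_states \<alpha>\<^sub>0" "d \<rho> \<sigma>\<^sub>0 = v"
    and lower: "\<And>\<alpha> \<sigma>. eigenbasis (ptrace_b \<rho>) \<alpha> \<Longrightarrow> \<sigma> \<in> cq_states \<alpha> \<Longrightarrow> v \<le> d \<rho> \<sigma>"
  shows "C_cc d \<rho> = v"
proof -
  have attained: "C_basis d \<rho> \<alpha>\<^sub>0 = v"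
    unfolding C_basis_def by (rule cInf_eq_minimum) (use opt lower in auto)
  have bounded: "v \<le> C_basis d \<rho> \<alpha>" if "eigenbasis (ptrace_b \<rho>) \<alpha>" for \<alpha>
    unfolding C_basis_def
    by (rule cInf_greatest) (use cq_states_nonempty[of \<alpha>] lower[OF that] in auto)
  show ?thesis unfolding C_cc_def
    by (rule cInf_eq_minimum) (use opt(1) attained[symmetric] bounded in auto)
qed

section \<open>Schmidt decompositions\<close>

locale schmidt_decomposition =
  fixes x :: "nat \<Rightarrow> complex^'a::finite" and y :: "nat \<Rightarrow> complex^'b::finite"
    and lam :: "nat \<Rightarrow> real" and k :: nat
  assumes x_on: "\<forall>i<k. \<forall>j<k. cinner (x i) (x j) = (if i = j then 1 else 0)"
    and y_on: "\<forall>i<k. \<forall>j<k. cinner (y i) (y j) = (if i = j then 1 else 0)"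
    and lam_nonneg: "\<forall>i<k. lam i \<ge> 0"
    and lam_dec: "\<forall>i j. i \<le> j \<longrightarrow> j < k \<longrightarrow> lam j \<le> lam i"
    and lam_sum: "(\<Sum>i<k. lam i) = 1"
begin

definition z where "z i = tensor_vec (x i) (y i)"
definition psi where "psi = (\<Sum>i<k. complex_of_real (sqrt (lam i)) *s tensor_vec (x i) (y i))"
definition rho_a where "rho_a = diag_op x {..<k} lam"
definition purity where "purity = (\<Sum>i<k. (lam i)\<^sup>2)"
definition sigma_opt where
  "sigma_opt = (\<Sum>i<k. ((lam i)\<^sup>2 / (\<Sum>j<k. (lam j)\<^sup>2)) *\<^sub>R
                  outer (tensor_vec (x i) (y i)) (tensor_vec (x i) (y i)))"

lemma orthonormal_x: "orthonormal_on x {..<k}"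
  using x_on by (simp add: orthonormal_on_def)

lemma orthonormal_y: "orthonormal_on y {..<k}"
  using y_on by (simp add: orthonormal_on_def)

lemma orthonormal_z: "orthonormal_on z {..<k}"
  using x_on y_on by (simp add: orthonormal_on_def z_def cinner_tensor_vec)

lemma k_pos: "k > 0"
  using lam_sum by (cases k) auto

lemma lam_0_nonneg: "lam 0 \<ge> 0"
  using lam_nonneg k_pos by auto

lemma purity_pos: "purity > 0"
proof -
  have "purity \<noteq> 0"
  proof
    assume "purity = 0"
    then have "\<forall>i\<in>{..<k}. (lam i)\<^sup>2 = 0" unfolding purity_def by (subst (asm) sum_nonneg_eq_0_iff) auto
    then show False using lam_sum by simp
  qed
  then show ?thesis unfolding purity_def by (simp add: sum_nonneg order_le_neq_trans)
qed

lemma psi_eq: "psi = (\<Sum>i<k. complex_of_real (sqrt (lam i)) *s z i)"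
  by (simp add: psi_def z_def)

lemma cinner_z_psi: "i < k \<Longrightarrow> cinner (z i) psi = complex_of_real (sqrt (lam i))"
  unfolding psi_eq by (rule cinner_orthonormal_sum[OF orthonormal_z]) auto

lemma psi_unit: "cinner psi psi = 1"
proof -
  have "cinner psi psi = (\<Sum>i<k. cnj (complex_of_real (sqrt (lam i))) * complex_of_real (sqrt (lam i)))"
    unfolding psi_eq by (rule cinner_orthonormal_combination[OF orthonormal_z]) simp
  also have "\<dots> = (\<Sum>i<k. complex_of_real (lam i))"
    using lam_nonneg by (intro sum.cong refl) (simp flip: of_real_mult)
  also have "\<dots> = 1" using lam_sum by (simp flip: of_real_sum)
  finally show ?thesis .
qed

lemma rho_a_psd: "psd rho_a"
  unfolding rho_a_def by (rule diag_op_psd) (use lam_nonneg in auto)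

lemma rho_a_hermitian: "hermitian rho_a"
  using psd_hermitian[OF rho_a_psd] .

lemma rho_a_mult_vec: "rho_a *v v = (\<Sum>i<k. (complex_of_real (lam i) * cinner (x i) v) *s x i)"
  by (simp add: rho_a_def diag_op_mult_vec)

lemma partial_inner_psi:
  "partial_inner u psi = (\<Sum>i<k. (complex_of_real (sqrt (lam i)) * cinner u (x i)) *s y i)"
  by (simp add: psi_def partial_inner_sum partial_inner_scale partial_inner_tensor vector_smult_assoc)

lemma ptrace_b_psi: "ptrace_b (outer psi psi) = rho_a"
proof (rule mat_eq_cinner)
  fix u u'
  have "cinner u (ptrace_b (outer psi psi) *v u') = cinner (partial_inner u' psi) (partial_inner u psi)"
    by (rule cinner_ptrace_b_outer)
  also have "\<dots> = (\<Sum>i<k. cnj (complex_of_real (sqrt (lam i)) * cinner u' (x i))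
      * (complex_of_real (sqrt (lam i)) * cinner u (x i)))"
    unfolding partial_inner_psi by (rule cinner_orthonormal_combination[OF orthonormal_y]) simp
  also have "\<dots> = (\<Sum>i<k. (complex_of_real (lam i) * cinner (x i) u') * cinner u (x i))"
    using lam_nonneg by (intro sum.cong refl) (simp add: cinner_cnj ac_simps flip: of_real_mult)
  also have "\<dots> = cinner u (rho_a *v u')"
    by (simp add: rho_a_mult_vec cinner_sum_right cinner_scale_right ac_simps)
  finally show "cinner u (ptrace_b (outer psi psi) *v u') = cinner u (rho_a *v u')" .
qed

lemma cinner_partial_inner_psi:
  "cinner (partial_inner u psi) (partial_inner u psi) = complex_of_real (Re (cinner u (rho_a *v u)))"
  using cinner_ptrace_b_outer[of u psi u] ptrace_b_psi hermitian_quad_real[OF rho_a_hermitian, of u]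
  by simp

lemma quad_rho_a_le: "Re (cinner v (rho_a *v v)) \<le> lam 0 * Re (cinner v v)"
proof -
  have "Re (cinner v (rho_a *v v)) = (\<Sum>i<k. lam i * (cmod (cinner (x i) v))\<^sup>2)"
    by (simp add: rho_a_def diag_op_quad)
  also have "\<dots> \<le> (\<Sum>i<k. lam 0 * (cmod (cinner (x i) v))\<^sup>2)"
    using lam_dec by (intro sum_mono mult_right_mono) auto
  also have "\<dots> = lam 0 * (\<Sum>i<k. (cmod (cinner (x i) v))\<^sup>2)"
    by (simp add: sum_distrib_left)
  also have "\<dots> \<le> lam 0 * Re (cinner v v)"
    by (intro mult_left_mono bessel_inequality[OF orthonormal_x] lam_0_nonneg) simp
  finally show ?thesis .
qed

lemma eigenbasis_extending_x:
  obtains \<alpha> j where "eigenbasis rho_a \<alpha>" "inj_on j {..<k}" "\<And>i. i < k \<Longrightarrow> \<alpha> (j i) = x i"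
proof -
  obtain \<alpha> j where \<alpha>: "orthonormal_basis \<alpha>" and j: "inj_on j {..<k}" "\<And>i. i < k \<Longrightarrow> \<alpha> (j i) = x i"
    using orthonormal_on_extend_basis[OF orthonormal_x] by blast
  have "\<exists>\<mu>. rho_a *v \<alpha> a = \<mu> *s \<alpha> a" for a
  proof (cases "a \<in> j ` {..<k}")
    case True
    then obtain i where "i < k" "a = j i" by blast
    then show ?thesis
      using j(2) diag_op_mult_vec_basis[OF orthonormal_x] by (auto simp: rho_a_def)
  next
    case False
    have "cinner (x i) (\<alpha> a) = 0" if "i < k" for i
      using \<alpha> False that j(2)[OF that, symmetric] by (auto simp: orthonormal_basis_def)
    then have "rho_a *v \<alpha> a = 0 *s \<alpha> a" by (simp add: rho_a_mult_vec)
    then show ?thesis by blast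
  qed
  with \<alpha> have "eigenbasis rho_a \<alpha>" by (simp add: eigenbasis_def)
  with j show thesis using that by blast
qed

lemma eigenbasis_sum_eigenvalues_sq:
  assumes eb: "eigenbasis rho_a \<alpha>"
  shows "(\<Sum>a\<in>UNIV. (Re (cinner (\<alpha> a) (rho_a *v \<alpha> a)))\<^sup>2) = purity"
proof -
  have \<alpha>: "orthonormal_basis \<alpha>" using eb by (simp add: eigenbasis_def)
  have sq: "(Re (cinner (\<alpha> a) (rho_a *v \<alpha> a)))\<^sup>2 = (\<Sum>i<k. (lam i)\<^sup>2 * (cmod (cinner (x i) (\<alpha> a)))\<^sup>2)"
    for a
  proof -
    define \<mu> where "\<mu> = Re (cinner (\<alpha> a) (rho_a *v \<alpha> a))"
    have unit: "cinner (\<alpha> a) (\<alpha> a) = 1" using \<alpha> by (simp add: orthonormal_basis_def)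
    obtain c where c: "rho_a *v \<alpha> a = c *s \<alpha> a" using eb by (auto simp: eigenbasis_def)
    have "c = cinner (\<alpha> a) (rho_a *v \<alpha> a)" using unit by (simp add: c cinner_scale_right)
    then have "c = complex_of_real \<mu>" unfolding \<mu>_def using hermitian_quad_real[OF rho_a_hermitian] by simp
    then have "complex_of_real (\<mu>\<^sup>2) = cinner (rho_a *v \<alpha> a) (rho_a *v \<alpha> a)"
      by (simp add: c cinner_scale_left cinner_scale_right unit power2_eq_square)
    also have "\<dots> = complex_of_real (\<Sum>i<k. (lam i)\<^sup>2 * (cmod (cinner (x i) (\<alpha> a)))\<^sup>2)"
      unfolding rho_a_def by (rule cinner_diag_op_mult_vec_self[OF orthonormal_x finite_lessThan])
    finally show ?thesis unfolding \<mu>_def by (simp only: of_real_eq_iff)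
  qed
  have "(\<Sum>a\<in>UNIV. (cmod (cinner (x i) (\<alpha> a)))\<^sup>2) = 1" if "i < k" for i
    using parseval_norm[OF \<alpha>, of "x i"] x_on that by simp
  then have "(\<Sum>i<k. (lam i)\<^sup>2 * (\<Sum>a\<in>UNIV. (cmod (cinner (x i) (\<alpha> a)))\<^sup>2)) = purity"
    unfolding purity_def by (intro sum.cong) simp_all
  then show ?thesis
    unfolding sq by (simp add: sum_distrib_left) (subst sum.swap, simp)
qed

lemma affinity_cq_state_le:
  assumes eb: "eigenbasis rho_a \<alpha>" and \<sigma>: "\<sigma> \<in> cq_states \<alpha>"
  shows "0 \<le> affinity (outer psi psi) \<sigma>" "affinity (outer psi psi) \<sigma> \<le> sqrt purity"
proof -
  have \<alpha>: "orthonormal_on \<alpha> UNIV" using eb by (simp add: eigenbasis_def orthonormal_on_UNIV_iff)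
  obtain p \<sigma>s where p: "\<forall>i. p i \<ge> 0" "sum p UNIV = 1" and ds: "\<forall>i. density (\<sigma>s i)"
    and \<sigma>_eq: "\<sigma> = cq_op \<alpha> p \<sigma>s"
    using \<sigma> by (auto simp: cq_states_iff)
  define w where "w a = partial_inner (\<alpha> a) psi" for a
  define \<mu> where "\<mu> a = Re (cinner (\<alpha> a) (rho_a *v \<alpha> a))" for a
  have ww: "Re (cinner (w a) (w a)) = \<mu> a" for a by (simp add: w_def \<mu>_def cinner_partial_inner_psi)
  have aff: "affinity (outer psi psi) \<sigma> = (\<Sum>a\<in>UNIV. sqrt (p a) * Re (cinner (w a) (msqrt (\<sigma>s a) *v w a)))"
    unfolding affinity_pure[OF psi_unit] \<sigma>_eq cq_op_msqrt[OF \<alpha> p(1)[rule_format] ds[rule_format]]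
      cq_op_quad w_def
    by (simp add: Re_sum)
  have t0: "0 \<le> Re (cinner (w a) (msqrt (\<sigma>s a) *v w a))" for a
    using density_quad_bounds(3)[OF ds[rule_format]] .
  have t1: "Re (cinner (w a) (msqrt (\<sigma>s a) *v w a)) \<le> \<mu> a" for a
    using density_quad_bounds(2)[OF ds[rule_format]] ww by metis
  show "0 \<le> affinity (outer psi psi) \<sigma>"
    unfolding aff by (intro sum_nonneg mult_nonneg_nonneg) (use t0 p in auto)
  have "affinity (outer psi psi) \<sigma> \<le> (\<Sum>a\<in>UNIV. sqrt (p a) * \<mu> a)"
    unfolding aff by (intro sum_mono mult_left_mono t1) (use p in auto)
  also have "\<dots> = (\<Sum>a\<in>UNIV. \<bar>sqrt (p a)\<bar> * \<bar>\<mu> a\<bar>)"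
    using p rho_a_psd by (simp add: \<mu>_def psd_def)
  also have "\<dots> \<le> L2_set (\<lambda>a. sqrt (p a)) UNIV * L2_set \<mu> UNIV"
    by (rule L2_set_mult_ineq)
  also have "\<dots> = sqrt purity"
    using p eigenbasis_sum_eigenvalues_sq[OF eb] by (simp add: L2_set_def \<mu>_def)
  finally show "affinity (outer psi psi) \<sigma> \<le> sqrt purity" .
qed

lemma fidelity_cq_state_le:
  assumes eb: "eigenbasis rho_a \<alpha>" and \<sigma>: "\<sigma> \<in> cq_states \<alpha>"
  shows "(fidelity (outer psi psi) \<sigma>)\<^sup>2 \<le> lam 0"
proof -
  have unit: "cinner (\<alpha> a) (\<alpha> a) = 1" for a using eb by (simp add: eigenbasis_def orthonormal_basis_def)
  obtain p \<sigma>s where p: "\<forall>i. p i \<ge> 0" "sum p UNIV = 1" and ds: "\<forall>i. density (\<sigma>s i)"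
    and \<sigma>_eq: "\<sigma> = cq_op \<alpha> p \<sigma>s"
    using \<sigma> by (auto simp: cq_states_iff)
  have ps: "psd \<sigma>" unfolding \<sigma>_eq by (rule cq_op_psd) (use p ds in \<open>auto simp: density_def\<close>)
  define w where "w a = partial_inner (\<alpha> a) psi" for a
  have w_le: "Re (cinner (w a) (w a)) \<le> lam 0" for a
    using quad_rho_a_le[of "\<alpha> a"] unit by (simp add: w_def cinner_partial_inner_psi)
  have "Re (cinner psi (\<sigma> *v psi)) = (\<Sum>a\<in>UNIV. p a * Re (cinner (w a) (\<sigma>s a *v w a)))"
    unfolding \<sigma>_eq cq_op_quad w_def by (simp add: Re_sum)
  also have "\<dots> \<le> (\<Sum>a\<in>UNIV. p a * lam 0)"
  proof (intro sum_mono mult_left_mono)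
    fix a
    show "Re (cinner (w a) (\<sigma>s a *v w a)) \<le> lam 0"
      using density_quad_bounds(1)[OF ds[rule_format, of a], of "w a"] w_le[of a] by linarith
  qed (use p in auto)
  also have "\<dots> = lam 0" using p by (simp flip: sum_distrib_right)
  finally have "Re (cinner psi (\<sigma> *v psi)) \<le> lam 0" .
  moreover have "Re (cinner psi (\<sigma> *v psi)) \<ge> 0" using ps by (simp add: psd_def)
  ultimately show ?thesis unfolding fidelity_pure[OF ps] by simp
qed

lemma sigma_opt_eq: "sigma_opt = diag_op z {..<k} (\<lambda>i. (lam i)\<^sup>2 / purity)"
  by (simp add: sigma_opt_def diag_op_def z_def purity_def)

lemma sigma_opt_cq_state:
  assumes "inj_on j {..<k}" "\<And>i. i < k \<Longrightarrow> \<alpha> (j i) = x i"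
  shows "sigma_opt \<in> cq_states \<alpha>"
proof -
  have "sigma_opt = (\<Sum>i<k. ((lam i)\<^sup>2 / purity) *\<^sub>R tensor_mat (outer (x i) (x i)) (outer (y i) (y i)))"
    by (simp add: sigma_opt_def tensor_mat_outer purity_def)
  also have "\<dots> \<in> cq_states \<alpha>"
    using assms purity_pos y_on
    by (intro cq_states_reindex) (auto intro: outer_density simp: purity_def simp flip: sum_divide_distrib)
  finally show ?thesis .
qed

lemma affinity_sigma_opt: "affinity (outer psi psi) sigma_opt = sqrt purity"
proof -
  have "msqrt sigma_opt = diag_op z {..<k} (\<lambda>i. sqrt ((lam i)\<^sup>2 / purity))"
    unfolding sigma_opt_eq by (rule msqrt_diag_op[OF orthonormal_z]) (use purity_pos in auto)
  then have "affinity (outer psi psi) sigma_opt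
      = (\<Sum>i<k. sqrt ((lam i)\<^sup>2 / purity) * (cmod (cinner (z i) psi))\<^sup>2)"
    by (simp add: affinity_pure[OF psi_unit] diag_op_quad)
  also have "\<dots> = (\<Sum>i<k. (lam i)\<^sup>2 / sqrt purity)"
    using lam_nonneg by (intro sum.cong refl) (simp add: cinner_z_psi real_sqrt_divide power2_eq_square)
  also have "\<dots> = sqrt purity"
    using purity_pos by (simp add: purity_def real_div_sqrt flip: sum_divide_distrib)
  finally show ?thesis .
qed

lemma d_A_sigma_opt: "d_A (outer psi psi) sigma_opt = 1 - purity"
  using purity_pos by (simp add: d_A_def affinity_sigma_opt)

lemma d_A_cq_state_ge:
  assumes "eigenbasis rho_a \<alpha>" "\<sigma> \<in> cq_states \<alpha>"
  shows "1 - purity \<le> d_A (outer psi psi) \<sigma>"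
proof -
  have "(affinity (outer psi psi) \<sigma>)\<^sup>2 \<le> (sqrt purity)\<^sup>2"
    using affinity_cq_state_le[OF assms] by (intro power_mono)
  then show ?thesis using purity_pos by (simp add: d_A_def)
qed

lemma C_cc_d_A: "C_cc d_A (outer psi psi) = 1 - purity"
proof -
  obtain \<alpha> j where "eigenbasis rho_a \<alpha>" "inj_on j {..<k}" "\<And>i. i < k \<Longrightarrow> \<alpha> (j i) = x i"
    using eigenbasis_extending_x by blast
  then show ?thesis
    using sigma_opt_cq_state d_A_sigma_opt d_A_cq_state_ge
    by (intro C_cc_eq_attained[where \<alpha>\<^sub>0 = \<alpha> and \<sigma>\<^sub>0 = sigma_opt]) (simp_all add: ptrace_b_psi)
qed

lemma d_F_z_0: "d_F (outer psi psi) (outer (z 0) (z 0)) = 1 - lam 0"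
proof -
  have "cinner psi (outer (z 0) (z 0) *v psi) = cinner (z 0) psi * cnj (cinner (z 0) psi)"
    by (simp add: outer_mult_vec cinner_scale_right cinner_cnj)
  also have "\<dots> = complex_of_real (lam 0)"
    using lam_0_nonneg by (simp add: cinner_z_psi[OF k_pos] flip: of_real_mult)
  finally show ?thesis
    using lam_0_nonneg by (simp add: d_F_def fidelity_pure[OF outer_psd])
qed

lemma z_0_cq_state:
  assumes "inj_on j {..<k}" "\<And>i. i < k \<Longrightarrow> \<alpha> (j i) = x i"
  shows "outer (z 0) (z 0) \<in> cq_states \<alpha>"
proof -
  have "outer (z 0) (z 0) = (\<Sum>i\<in>{0}. 1 *\<^sub>R tensor_mat (outer (x i) (x i)) (outer (y i) (y i)))"
    by (simp add: z_def tensor_mat_outer)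
  also have "\<dots> \<in> cq_states \<alpha>"
    using assms k_pos y_on by (intro cq_states_reindex) (auto intro: outer_density)
  finally show ?thesis .
qed

lemma C_cc_d_F: "C_cc d_F (outer psi psi) = 1 - lam 0"
proof -
  obtain \<alpha> j where "eigenbasis rho_a \<alpha>" "inj_on j {..<k}" "\<And>i. i < k \<Longrightarrow> \<alpha> (j i) = x i"
    using eigenbasis_extending_x by blast
  then show ?thesis
    using z_0_cq_state d_F_z_0 fidelity_cq_state_le
    by (intro C_cc_eq_attained[where \<alpha>\<^sub>0 = \<alpha> and \<sigma>\<^sub>0 = "outer (z 0) (z 0)"])
      (simp_all add: ptrace_b_psi d_F_def)
qed

end

theorem mainTheorem14:
  fixes x :: "nat \<Rightarrow> complex^'a" and y :: "nat \<Rightarrow> complex^'b"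
    and lam :: "nat \<Rightarrow> real" and k :: nat
  assumes x_on: "\<forall>i<k. \<forall>j<k. cinner (x i) (x j) = (if i = j then 1 else 0)"
    and y_on: "\<forall>i<k. \<forall>j<k. cinner (y i) (y j) = (if i = j then 1 else 0)"
    and lam_nonneg: "\<forall>i<k. lam i \<ge> 0"
    and lam_dec: "\<forall>i j. i \<le> j \<longrightarrow> j < k \<longrightarrow> lam j \<le> lam i"
    and lam_sum: "(\<Sum>i<k. lam i) = 1"
  defines "\<rho> \<equiv> outer (\<Sum>i<k. complex_of_real (sqrt (lam i)) *s tensor_vec (x i) (y i))
                          (\<Sum>i<k. complex_of_real (sqrt (lam i)) *s tensor_vec (x i) (y i))"
    and "\<sigma>opt \<equiv> (\<Sum>i<k. ((lam i)\<^sup>2 / (\<Sum>j<k. (lam j)\<^sup>2)) *\<^sub>R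
                  outer (tensor_vec (x i) (y i)) (tensor_vec (x i) (y i)))"
  shows "C_cc d_A \<rho> = 1 - (\<Sum>i<k. (lam i)\<^sup>2)
         \<and> C_cc d_F \<rho> = 1 - lam 0
         \<and> (\<exists>\<alpha>. eigenbasis (ptrace_b \<rho>) \<alpha> \<and> \<sigma>opt \<in> cq_states \<alpha> \<and> d_A \<rho> \<sigma>opt = C_cc d_A \<rho>)"
proof -
  interpret schmidt_decomposition x y lam k
    using assms by unfold_locales auto
  have \<rho>: "\<rho> = outer psi psi" by (simp add: \<rho>_def psi_def)
  have \<sigma>opt: "\<sigma>opt = sigma_opt" by (simp add: \<sigma>opt_def sigma_opt_def)
  obtain \<alpha> j where \<alpha>: "eigenbasis rho_a \<alpha>" "inj_on j {..<k}" "\<And>i. i < k \<Longrightarrow> \<alpha> (j i) = x i"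
    using eigenbasis_extending_x by blast
  have "eigenbasis (ptrace_b \<rho>) \<alpha> \<and> \<sigma>opt \<in> cq_states \<alpha> \<and> d_A \<rho> \<sigma>opt = C_cc d_A \<rho>"
    using \<alpha> sigma_opt_cq_state d_A_sigma_opt C_cc_d_A by (simp add: \<rho> \<sigma>opt ptrace_b_psi)
  then show ?thesis
    using C_cc_d_A C_cc_d_F by (auto simp: \<rho> purity_def)
qed

end
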